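(* Let $(b_n)_{n\ge 0}$ and $(e_n)_{n\ge 0}$ be sequences of real numbers satisfying: (1) $b_n>0$ for all sufficiently large $n$; (2) there is a constant $C$ such that $\displaystyle \frac{\sum_{k=0}^{2n} b_k}{\sum_{k=0}^{n} b_k}<C$ for all sufficiently large $n$; (3) $\displaystyle\limsup_{n\to\infty} b_n<1$; (4) $\displaystyle\lim_{n\to\infty}\frac{\left(\sum_{k=0}^n b_k^2\right)\left(\sum_{k=0}^n e_k^2\right)}{\left(\sum_{k=0}^n b_k\right)^3}=0$. Then there is no set $A\subseteq\mathbb{N}$ such that for every $N\ge 0$ $$\sum_{n=0}^N R_A(n)=\sum_{n=0}^N\sum_{k=0}^n b_kb_{n-k}+e_N .$$
   Context: $\mathbb{N}$ denotes the set of non-negative integers. For $A\subseteq\mathbb{N}$, $R_A(n)$ denotes the number of ordered pairs $(a,a')$ with $a,a'\in A$ and $a+a'=n$; equivalently $R_A(n)=\sum_{k=0}^n\chi_A(k)\chi_A(n-k)$ where $\chi_A$ is the characteristic function of $A$. *)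

theory Defs
  imports "HOL-Analysis.Analysis"
begin

definition R :: "nat set \<Rightarrow> nat \<Rightarrow> nat" where
  "R A n = card {(a, a'). a \<in> A \<and> a' \<in> A \<and> a + a' = n}"

end

theory Submission
  imports Defs
begin

(*
  Write X(z), B(z), E(z) for the power series with coefficients the indicator of A, b_n and e_n.
  The hypothesis on A says precisely that X^2 = B^2 + (1 - z) E, and all three series converge on
  the open unit disc.

  If the partial sums of b stay bounded, hypothesis (4) forces E = 0, so X = B or X = -B, which is
  impossible since X has coefficients 0 and 1 while 0 < b_n < 1 for large n.

  Otherwise multiply the identity by the block G(z) = 1 + z + ... + z^(M-1): the coefficients of
  C = X G are natural numbers and C^2 = (B G)^2 + E (1 - z) G^2.  Comparing coefficient norms on
  the circle of radius sqrt x (Parseval at roots of unity) gives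
      M x^M X(x) <= sum c_n^2 x^n <= M^2 B2(x) + sqrt (E2(x)) sqrt (2 M),
  where B2 and E2 have the squared coefficients of B and E.  With M close to delta B(x) / B2(x),
  and X(x) >= B(x) - 1 (from X^2 = B^2 + (1 - x) E and Cauchy-Schwarz), this forces
  B(x) < 4 / (1 - delta) whenever B2(x) <= delta B(x) and E2(x) B2(x) <= delta (1 - delta)^2 / 16 B(x)^3.
  Finally, there are points x close to 1 where B(x) is arbitrarily large and both estimates hold:
  (3) gives the first one, and the doubling condition (2) transfers the ratio condition (4) from
  partial sums to values of the series at x.
*)

section \<open>Series and power series converging on the unit disc\<close>

lemma summable_power2_if_summable_abs:
  fixes a :: "nat \<Rightarrow> real"
  assumes "summable (\<lambda>n. \<bar>a n\<bar>)"
  shows "summable (\<lambda>n. (a n)\<^sup>2)"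
proof -
  have "eventually (\<lambda>n. \<bar>a n\<bar> < 1) sequentially"
    using summable_LIMSEQ_zero[OF assms] by (rule order_tendstoD) simp
  then obtain N where N: "\<And>n. n \<ge> N \<Longrightarrow> \<bar>a n\<bar> < 1" by (auto simp: eventually_sequentially)
  have "\<bar>a n\<bar> * \<bar>a n\<bar> \<le> 1 * \<bar>a n\<bar>" if "n \<ge> N" for n
    using N[OF that] by (intro mult_right_mono) auto
  then show ?thesis
    by (intro summable_comparison_test'[OF assms, of N]) (simp add: power2_eq_square abs_mult)
qed

lemma Cauchy_Schwarz_ineq_suminf:
  fixes a c :: "nat \<Rightarrow> real"
  assumes a: "summable (\<lambda>n. (a n)\<^sup>2)" and c: "summable (\<lambda>n. (c n)\<^sup>2)"
  shows "(\<Sum>n. a n * c n)\<^sup>2 \<le> (\<Sum>n. (a n)\<^sup>2) * (\<Sum>n. (c n)\<^sup>2)"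
proof -
  have "norm (a n * c n) \<le> ((a n)\<^sup>2 + (c n)\<^sup>2) / 2" for n
    using sum_squares_bound[of "\<bar>a n\<bar>" "\<bar>c n\<bar>"] by (simp add: abs_mult)
  moreover have "summable (\<lambda>n. ((a n)\<^sup>2 + (c n)\<^sup>2) / 2)"
    using a c by (intro summable_divide summable_add)
  ultimately have "summable (\<lambda>n. a n * c n)"
    by (blast intro: summable_comparison_test')
  then have "(\<lambda>L. (\<Sum>n<L. a n * c n)\<^sup>2) \<longlonglongrightarrow> (\<Sum>n. a n * c n)\<^sup>2"
    by (intro tendsto_power summable_LIMSEQ)
  moreover have "(\<lambda>L. (\<Sum>n<L. (a n)\<^sup>2) * (\<Sum>n<L. (c n)\<^sup>2)) \<longlonglongrightarrow> (\<Sum>n. (a n)\<^sup>2) * (\<Sum>n. (c n)\<^sup>2)"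
    by (intro tendsto_mult summable_LIMSEQ a c)
  ultimately show ?thesis
    by (rule LIMSEQ_le) (auto intro: Cauchy_Schwarz_ineq_sum)
qed

lemma summable_norm_of_real_power:
  fixes a :: "nat \<Rightarrow> real" and w :: complex
  assumes "summable (\<lambda>n. \<bar>a n\<bar>)" "norm w \<le> 1"
  shows "summable (\<lambda>n. norm (complex_of_real (a n) * w ^ n))"
  by (rule summable_comparison_test'[OF assms(1), of 0])
     (use assms(2) in \<open>simp add: norm_mult norm_power mult_left_le power_le_one\<close>)

definition fps_sq_coeffs :: "real fps \<Rightarrow> real fps" where
  "fps_sq_coeffs f = Abs_fps (\<lambda>n. (fps_nth f n)\<^sup>2)"

definition fps_dilate :: "'a::comm_semiring_1 \<Rightarrow> 'a fps \<Rightarrow> 'a fps" where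
  "fps_dilate s f = Abs_fps (\<lambda>n. s ^ n * fps_nth f n)"

lemma fps_sq_coeffs_nth [simp]: "fps_nth (fps_sq_coeffs f) n = (fps_nth f n)\<^sup>2"
  by (simp add: fps_sq_coeffs_def)

lemma fps_dilate_nth [simp]: "fps_nth (fps_dilate s f) n = s ^ n * fps_nth f n"
  by (simp add: fps_dilate_def)

lemma fps_dilate_add: "fps_dilate s (f + g) = fps_dilate s f + fps_dilate s g"
  by (rule fps_ext) (simp add: distrib_left)

lemma fps_dilate_mult: "fps_dilate s (f * g) = fps_dilate s f * fps_dilate s g"
proof (rule fps_ext)
  fix n
  have "s ^ n * (fps_nth f i * fps_nth g (n - i)) = s ^ i * fps_nth f i * (s ^ (n - i) * fps_nth g (n - i))" if "i \<le> n" for i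
    using that by (simp add: power_add[symmetric] mult_ac)
  then show "fps_nth (fps_dilate s (f * g)) n = fps_nth (fps_dilate s f * fps_dilate s g) n"
    by (simp add: fps_mult_nth sum_distrib_left)
qed

lemma norm_less_fps_conv_radius:
  fixes f :: "'a::{banach,real_normed_div_algebra} fps"
  assumes "1 \<le> fps_conv_radius f" "norm z < 1"
  shows "norm z < fps_conv_radius f"
  using assms(1) by (rule order.strict_trans2[rotated]) (use assms(2) in simp)

lemma fps_conv_radius_mult_ge:
  fixes f g :: "'a::{banach,real_normed_field} fps"
  assumes "r \<le> fps_conv_radius f" "r \<le> fps_conv_radius g"
  shows "r \<le> fps_conv_radius (f * g)"
  using fps_conv_radius_mult[of f g] assms by (meson min.boundedI order.trans)

lemma fps_conv_radius_diff_ge: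
  fixes f g :: "'a::{banach,real_normed_div_algebra} fps"
  assumes "r \<le> fps_conv_radius f" "r \<le> fps_conv_radius g"
  shows "r \<le> fps_conv_radius (f - g)"
  using fps_conv_radius_diff[of f g] assms by (meson min.boundedI order.trans)

lemma fps_conv_radius_ge_1_if_bounded:
  fixes f :: "real fps"
  assumes "\<And>n. N \<le> n \<Longrightarrow> \<bar>fps_nth f n\<bar> \<le> K"
  shows "1 \<le> fps_conv_radius f"
  unfolding fps_conv_radius_def
proof (rule conv_radius_geI_ex')
  fix r :: real assume r: "0 < r" "ereal r < 1"
  then have "summable (\<lambda>n. K * r ^ n)" by (intro summable_mult summable_geometric) auto
  then show "summable (\<lambda>n. fps_nth f n * of_real r ^ n)"
    by (rule summable_comparison_test'[where N = N])
       (use assms r in \<open>auto simp: abs_mult intro!: mult_right_mono\<close>)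
qed

lemma summable_abs_fps_dilate:
  fixes f :: "real fps"
  assumes "1 \<le> fps_conv_radius f" "\<bar>s\<bar> < 1"
  shows "summable (\<lambda>n. \<bar>fps_nth (fps_dilate s f) n\<bar>)"
  using norm_summable_fps[OF norm_less_fps_conv_radius[OF assms(1), of s]] assms(2)
  by (simp add: mult.commute)

lemma eval_fps_sq_coeffs_eq_suminf_dilate:
  fixes f :: "real fps"
  assumes "0 \<le> x"
  shows "eval_fps (fps_sq_coeffs f) x = (\<Sum>n. (fps_nth (fps_dilate (sqrt x) f) n)\<^sup>2)"
  using assms by (simp add: eval_fps_def power_mult_distrib real_sqrt_power[symmetric] mult.commute)

lemma fps_conv_radius_sq_coeffs:
  fixes f :: "real fps"
  assumes "1 \<le> fps_conv_radius f"
  shows "1 \<le> fps_conv_radius (fps_sq_coeffs f)"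
  unfolding fps_conv_radius_def
proof (rule conv_radius_geI_ex')
  fix r :: real assume r: "0 < r" "ereal r < 1"
  have "summable (\<lambda>n. (fps_nth (fps_dilate (sqrt r) f) n)\<^sup>2)"
    using r by (intro summable_power2_if_summable_abs summable_abs_fps_dilate assms) auto
  then show "summable (\<lambda>n. fps_nth (fps_sq_coeffs f) n * of_real r ^ n)"
    using r by (simp add: power_mult_distrib real_sqrt_power[symmetric] mult.commute)
qed

lemma eval_fps_nonneg:
  fixes f :: "real fps"
  assumes "1 \<le> fps_conv_radius f" "\<And>n. 0 \<le> fps_nth f n" "0 \<le> x" "x < 1"
  shows "0 \<le> eval_fps f x"
  unfolding eval_fps_def using assms by (intro suminf_nonneg summable_fps norm_less_fps_conv_radius) auto

lemma eval_fps_sq_coeffs_nonneg: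
  fixes f :: "real fps"
  assumes "1 \<le> fps_conv_radius f" "0 \<le> x" "x < 1"
  shows "0 \<le> eval_fps (fps_sq_coeffs f) x"
  using assms by (intro eval_fps_nonneg fps_conv_radius_sq_coeffs) auto

lemma eval_fps_square_le:
  fixes f :: "real fps"
  assumes "1 \<le> fps_conv_radius f" "0 \<le> x" "x < 1"
  shows "(eval_fps f x)\<^sup>2 \<le> eval_fps (fps_sq_coeffs f) x / (1 - x)"
proof -
  define t where "t = sqrt x"
  have t: "0 \<le> t" "t < 1" using assms by (auto simp: t_def)
  have tx: "(t ^ n)\<^sup>2 = x ^ n" for n
    using assms by (simp add: t_def power_mult_distrib real_sqrt_power[symmetric])
  have geom: "(\<lambda>n. (t ^ n)\<^sup>2) sums (1 / (1 - x))"
    unfolding tx using assms by (intro geometric_sums) simp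
  have "eval_fps f x = (\<Sum>n. fps_nth (fps_dilate t f) n * t ^ n)"
    unfolding eval_fps_def tx[symmetric] by (simp add: power2_eq_square mult_ac)
  also have "\<dots>\<^sup>2 \<le> (\<Sum>n. (fps_nth (fps_dilate t f) n)\<^sup>2) * (\<Sum>n. (t ^ n)\<^sup>2)"
    using t geom by (intro Cauchy_Schwarz_ineq_suminf summable_power2_if_summable_abs
        summable_abs_fps_dilate assms(1)) (auto simp: sums_iff)
  also have "\<dots> = eval_fps (fps_sq_coeffs f) x / (1 - x)"
    using geom assms by (simp add: eval_fps_sq_coeffs_eq_suminf_dilate t_def sums_iff)
  finally show ?thesis .
qed

lemma fps_mult_ones_eq_partial_sums:
  fixes f :: "'a::comm_ring_1 fps"
  shows "f * Abs_fps (\<lambda>_. 1) = Abs_fps (\<lambda>n. \<Sum>k\<le>n. fps_nth f k)"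
  by (rule fps_ext) (simp add: fps_mult_nth atLeast0AtMost)

lemma fps_one_minus_X_mult_ones: "(1 - fps_X) * Abs_fps (\<lambda>_. 1 :: 'a::comm_ring_1) = 1"
proof (rule fps_ext)
  fix n show "fps_nth ((1 - fps_X) * Abs_fps (\<lambda>_. 1 :: 'a)) n = fps_nth 1 n"
    by (cases n) (simp_all add: algebra_simps)
qed

lemma fps_conv_radius_partial_sums:
  fixes f :: "real fps"
  assumes "1 \<le> fps_conv_radius f"
  shows "1 \<le> fps_conv_radius (Abs_fps (\<lambda>n. \<Sum>k\<le>n. fps_nth f k))"
  unfolding fps_mult_ones_eq_partial_sums[symmetric]
  by (intro fps_conv_radius_mult_ge assms fps_conv_radius_ge_1_if_bounded[of 0 _ 1]) simp

lemma eval_fps_eq_partial_sums: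
  fixes f :: "real fps"
  assumes "1 \<le> fps_conv_radius f" "\<bar>x\<bar> < 1"
  shows "eval_fps f x = (1 - x) * eval_fps (Abs_fps (\<lambda>n. \<Sum>k\<le>n. fps_nth f k)) x"
proof -
  let ?F = "Abs_fps (\<lambda>n. \<Sum>k\<le>n. fps_nth f k)"
  have "(1 - fps_X) * ?F = f * ((1 - fps_X) * Abs_fps (\<lambda>_. 1))"
    by (simp only: fps_mult_ones_eq_partial_sums[symmetric] mult_ac)
  then have "f = (1 - fps_X) * ?F"
    by (simp add: fps_one_minus_X_mult_ones)
  moreover have "norm x < fps_conv_radius (1 - fps_X :: real fps)"
    by (rule order.strict_trans2[OF _ fps_conv_radius_diff]) simp
  moreover have "norm x < fps_conv_radius ?F"
    using assms by (intro norm_less_fps_conv_radius fps_conv_radius_partial_sums) auto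
  ultimately have "eval_fps f x = eval_fps (1 - fps_X) x * eval_fps ?F x"
    by (metis eval_fps_mult)
  then show ?thesis by (simp add: eval_fps_diff)
qed

lemma eval_fps_sq_coeffs_mult_eq_partial_sums:
  fixes f g :: "real fps"
  assumes radius: "1 \<le> fps_conv_radius f" "1 \<le> fps_conv_radius g" and x: "\<bar>x\<bar> < 1"
  defines "F \<equiv> Abs_fps (\<lambda>m. \<Sum>k\<le>m. (fps_nth f k)\<^sup>2)" and "G \<equiv> Abs_fps (\<lambda>m. \<Sum>k\<le>m. (fps_nth g k)\<^sup>2)"
  shows "eval_fps (fps_sq_coeffs f) x * eval_fps (fps_sq_coeffs g) x = (1 - x)\<^sup>2 * eval_fps (F * G) x"
proof -
  have "eval_fps (fps_sq_coeffs h) x = (1 - x) * eval_fps (Abs_fps (\<lambda>m. \<Sum>k\<le>m. (fps_nth h k)\<^sup>2)) x"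
    and "norm x < fps_conv_radius (Abs_fps (\<lambda>m. \<Sum>k\<le>m. (fps_nth h k)\<^sup>2))"
    if "1 \<le> fps_conv_radius h" for h
    using eval_fps_eq_partial_sums[OF fps_conv_radius_sq_coeffs[OF that] x] x
      norm_less_fps_conv_radius[OF fps_conv_radius_partial_sums[OF fps_conv_radius_sq_coeffs[OF that]], of x]
    by simp_all
  with radius show ?thesis unfolding F_def G_def by (simp add: eval_fps_mult power2_eq_square)
qed

lemma Nats_nonneg: "(x :: 'a::linordered_semidom) \<in> \<nat> \<Longrightarrow> 0 \<le> x"
  by (cases rule: Nats_cases) auto

lemma fps_nth_mult_in_Nats:
  assumes "\<And>n. fps_nth f n \<in> \<nat>" "\<And>n. fps_nth g n \<in> \<nat>"
  shows "fps_nth (f * g) n \<in> \<nat>"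
proof -
  have "(\<Sum>i\<in>A. fps_nth f i * fps_nth g (n - i)) \<in> \<nat>" for A
    by (induction A rule: infinite_finite_induct) (auto intro!: Nats_add Nats_mult assms)
  then show ?thesis by (simp add: fps_mult_nth)
qed

lemma eval_fps_le_sq_coeffs_if_Nats:
  fixes f :: "real fps"
  assumes "\<And>n. fps_nth f n \<in> \<nat>" "1 \<le> fps_conv_radius f" "0 \<le> x" "x < 1"
  shows "eval_fps f x \<le> eval_fps (fps_sq_coeffs f) x"
  unfolding eval_fps_def
proof (rule suminf_le)
  fix n
  obtain k :: nat where k: "fps_nth f n = k" using assms(1) Nats_cases by metis
  have "real k \<le> real k ^ 2" by (cases k) (auto simp: power2_eq_square)
  then show "fps_nth f n * x ^ n \<le> fps_nth (fps_sq_coeffs f) n * x ^ n"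
    using assms(3) by (simp add: k mult_right_mono)
qed (use assms summable_fps[OF norm_less_fps_conv_radius[OF assms(2), of x]]
    summable_fps[OF norm_less_fps_conv_radius[OF fps_conv_radius_sq_coeffs[OF assms(2)], of x]] in auto)

section \<open>Parseval's identity at the roots of unity\<close>

lemma cis_neq_1_if_not_multiple:
  fixes k :: int and L :: nat
  assumes "0 < L" "k \<noteq> 0" "\<bar>k\<bar> < L"
  shows "cis (2 * pi * k / L) \<noteq> 1"
proof
  assume "cis (2 * pi * k / L) = 1"
  then have "cos (2 * pi * k / L) = 1" by (metis cis.sel(1) one_complex.sel(1))
  then obtain m :: int where "2 * pi * k / L = m * 2 * pi" by (auto simp: cos_one_2pi_int)
  then have "pi * (2 * k) = pi * (2 * (m * L))" using assms(1) by (simp add: field_simps)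
  then have "k = m * int L" by (metis mult_cancel_left pi_neq_zero of_int_eq_iff of_int_mult of_int_of_nat_eq
        mult_cancel_left2 zero_neq_numeral)
  then have "\<bar>int L\<bar> \<le> \<bar>k\<bar>" using assms by (intro dvd_imp_le_int) auto
  with assms(3) show False by simp
qed

lemma sum_roots_of_unity_power_cnj:
  fixes L m n :: nat
  assumes L: "0 < L" and mn: "m < L" "n < L"
  shows "(\<Sum>j<L. cis (2 * pi * real j / L) ^ m * cnj (cis (2 * pi * real j / L)) ^ n) =
    (if m = n then of_nat L else 0)"
proof -
  define \<zeta> where "\<zeta> = cis (2 * pi * (int m - int n) / L)"
  have "cis (2 * pi * real j / L) ^ m * cnj (cis (2 * pi * real j / L)) ^ n =
      cis (real m * (2 * pi * real j / L) + real n * - (2 * pi * real j / L))" for j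
    by (simp only: Complex.DeMoivre cis_cnj cis_mult)
  also have "\<dots> j = \<zeta> ^ j" for j
    unfolding \<zeta>_def Complex.DeMoivre by (rule arg_cong[where f = cis]) (use L in \<open>simp add: field_simps\<close>)
  finally have sum_eq: "(\<Sum>j<L. cis (2 * pi * real j / L) ^ m * cnj (cis (2 * pi * real j / L)) ^ n) =
      (\<Sum>j<L. \<zeta> ^ j)" by simp
  show ?thesis
  proof (cases "m = n")
    case True
    then show ?thesis unfolding sum_eq by (simp add: \<zeta>_def)
  next
    case False
    then have "\<zeta> \<noteq> 1" unfolding \<zeta>_def using L mn by (intro cis_neq_1_if_not_multiple) auto
    moreover have "\<zeta> ^ L = 1" using L by (simp add: \<zeta>_def Complex.DeMoivre)
    ultimately show ?thesis using False unfolding sum_eq by (simp add: geometric_sum)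
  qed
qed

lemma parseval_roots_of_unity:
  fixes a :: "nat \<Rightarrow> real"
  assumes "0 < L"
  shows "(\<Sum>j<L. (cmod (\<Sum>n<L. of_real (a n) * cis (2 * pi * real j / L) ^ n))\<^sup>2) = L * (\<Sum>n<L. (a n)\<^sup>2)"
proof -
  define w where "w j = cis (2 * pi * real j / L)" for j :: nat
  have "complex_of_real (\<Sum>j<L. (cmod (\<Sum>n<L. of_real (a n) * w j ^ n))\<^sup>2)
      = (\<Sum>j<L. (\<Sum>m<L. of_real (a m) * w j ^ m) * cnj (\<Sum>n<L. of_real (a n) * w j ^ n))"
    by (simp only: of_real_sum complex_norm_square)
  also have "\<dots> = (\<Sum>j<L. \<Sum>m<L. \<Sum>n<L. of_real (a m * a n) * (w j ^ m * cnj (w j) ^ n))"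
    by (simp add: sum_product cnj_sum mult_ac)
  also have "\<dots> = (\<Sum>m<L. \<Sum>j<L. \<Sum>n<L. of_real (a m * a n) * (w j ^ m * cnj (w j) ^ n))"
    by (rule sum.swap)
  also have "\<dots> = (\<Sum>m<L. \<Sum>n<L. \<Sum>j<L. of_real (a m * a n) * (w j ^ m * cnj (w j) ^ n))"
    by (intro sum.cong refl sum.swap)
  also have "\<dots> = (\<Sum>m<L. \<Sum>n<L. of_real (a m * a n) * (\<Sum>j<L. w j ^ m * cnj (w j) ^ n))"
    by (simp only: sum_distrib_left)
  also have "\<dots> = (\<Sum>m<L. \<Sum>n<L. of_real (a m * a n) * (if m = n then of_nat L else 0))"
    by (intro sum.cong refl) (simp add: w_def sum_roots_of_unity_power_cnj[OF assms])
  also have "\<dots> = complex_of_real (L * (\<Sum>n<L. (a n)\<^sup>2))"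
    by (simp add: if_distrib sum_distrib_left power2_eq_square mult.commute cong: if_cong)
  finally show ?thesis unfolding w_def of_real_eq_iff .
qed

definition eval_trunc :: "real fps \<Rightarrow> nat \<Rightarrow> complex \<Rightarrow> complex" where
  "eval_trunc F L w = (\<Sum>n<L. complex_of_real (fps_nth F n) * w ^ n)"

lemma sum_power2_le_if_circle_bound:
  fixes P Q U V :: "real fps"
  assumes L: "0 < L"
    and bound: "\<And>w. w \<in> sphere 0 1 \<Longrightarrow> norm (eval_trunc P L w * eval_trunc P L w -
      eval_trunc Q L w * eval_trunc Q L w - eval_trunc U L w * eval_trunc V L w) \<le> \<epsilon>"
  shows "(\<Sum>n<L. (fps_nth P n)\<^sup>2) \<le>
    (\<Sum>n<L. (fps_nth Q n)\<^sup>2) + sqrt (\<Sum>n<L. (fps_nth U n)\<^sup>2) * sqrt (\<Sum>n<L. (fps_nth V n)\<^sup>2) + \<epsilon>"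
proof -
  define T where "T F j = eval_trunc F L (cis (2 * pi * real j / L))" for F j
  have parseval: "(\<Sum>j<L. (cmod (T F j))\<^sup>2) = L * (\<Sum>n<L. (fps_nth F n)\<^sup>2)" for F
    unfolding T_def eval_trunc_def by (rule parseval_roots_of_unity[OF L])
  have pointwise: "(cmod (T P j))\<^sup>2 \<le> (cmod (T Q j))\<^sup>2 + cmod (T U j) * cmod (T V j) + \<epsilon>" for j
  proof -
    let ?P = "T P j * T P j" and ?Q = "T Q j * T Q j" and ?U = "T U j * T V j"
    have "cmod ?P \<le> cmod (?Q + ?U) + cmod (?P - ?Q - ?U)"
      using norm_triangle_ineq[of "?Q + ?U" "?P - ?Q - ?U"] by simp
    moreover have "cmod (?Q + ?U) \<le> cmod ?Q + cmod ?U" by (rule norm_triangle_ineq)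
    moreover have "cmod (?P - ?Q - ?U) \<le> \<epsilon>" using bound by (simp add: T_def)
    ultimately show ?thesis by (simp add: norm_mult power2_eq_square)
  qed
  have cauchy_schwarz: "(\<Sum>j<L. cmod (T U j) * cmod (T V j))
      \<le> sqrt (\<Sum>j<L. (cmod (T U j))\<^sup>2) * sqrt (\<Sum>j<L. (cmod (T V j))\<^sup>2)"
    unfolding real_sqrt_mult[symmetric] by (rule real_le_rsqrt) (rule Cauchy_Schwarz_ineq_sum)
  have "L * (\<Sum>n<L. (fps_nth P n)\<^sup>2) \<le> (\<Sum>j<L. (cmod (T Q j))\<^sup>2 + cmod (T U j) * cmod (T V j) + \<epsilon>)"
    unfolding parseval[symmetric] by (intro sum_mono pointwise)
  also have "\<dots> \<le> L * (\<Sum>n<L. (fps_nth Q n)\<^sup>2) +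
      sqrt (L * (\<Sum>n<L. (fps_nth U n)\<^sup>2)) * sqrt (L * (\<Sum>n<L. (fps_nth V n)\<^sup>2)) + L * \<epsilon>"
    using cauchy_schwarz by (simp add: sum.distrib parseval)
  also have "\<dots> = L * ((\<Sum>n<L. (fps_nth Q n)\<^sup>2) +
      sqrt (\<Sum>n<L. (fps_nth U n)\<^sup>2) * sqrt (\<Sum>n<L. (fps_nth V n)\<^sup>2) + \<epsilon>)"
    by (simp add: real_sqrt_mult algebra_simps)
  finally show ?thesis using L by simp
qed

section \<open>Coefficients of power series with \<open>P\<^sup>2 = Q\<^sup>2 + U V\<close>\<close>

lemma sums_of_real_fps_mult:
  fixes f g :: "real fps" and w :: complex
  assumes "summable (\<lambda>n. \<bar>fps_nth f n\<bar>)" "summable (\<lambda>n. \<bar>fps_nth g n\<bar>)" "norm w \<le> 1"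
  shows "(\<lambda>n. of_real (fps_nth (f * g) n) * w ^ n) sums
    ((\<Sum>n. of_real (fps_nth f n) * w ^ n) * (\<Sum>n. of_real (fps_nth g n) * w ^ n))"
proof -
  have "(\<Sum>i\<le>n. of_real (fps_nth f i) * w ^ i * (of_real (fps_nth g (n - i)) * w ^ (n - i))) =
      of_real (fps_nth (f * g) n) * w ^ n" for n
    by (auto simp: fps_mult_nth atLeast0AtMost sum_distrib_right power_add[symmetric] intro!: sum.cong)
  with Cauchy_product_sums[OF summable_norm_of_real_power[OF assms(1,3)]
      summable_norm_of_real_power[OF assms(2,3)]]
  show ?thesis by simp
qed

lemma uniform_limit_eval_trunc:
  fixes F :: "real fps"
  assumes "summable (\<lambda>n. \<bar>fps_nth F n\<bar>)"
  shows "uniform_limit (sphere 0 1) (eval_trunc F) (\<lambda>w. \<Sum>n. complex_of_real (fps_nth F n) * w ^ n) sequentially"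
    and "bounded ((\<lambda>w. \<Sum>n. complex_of_real (fps_nth F n) * w ^ n) ` sphere 0 1)"
proof -
  show "uniform_limit (sphere 0 1) (eval_trunc F) (\<lambda>w. \<Sum>n. complex_of_real (fps_nth F n) * w ^ n) sequentially"
    unfolding eval_trunc_def[abs_def] by (rule Weierstrass_m_test[OF _ assms]) (simp add: norm_mult norm_power)
  show "bounded ((\<lambda>w. \<Sum>n. complex_of_real (fps_nth F n) * w ^ n) ` sphere 0 1)"
  proof (rule boundedI)
    fix z assume "z \<in> (\<lambda>w. \<Sum>n. complex_of_real (fps_nth F n) * w ^ n) ` sphere 0 1"
    then obtain w where "norm w = 1" "z = (\<Sum>n. complex_of_real (fps_nth F n) * w ^ n)" by auto
    then show "norm z \<le> (\<Sum>n. \<bar>fps_nth F n\<bar>)"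
      using summable_norm[OF summable_norm_of_real_power[OF assms, of w]] by (simp add: norm_mult norm_power)
  qed
qed

lemma uniform_limit_eval_trunc_square_eq:
  fixes P Q U V :: "real fps"
  assumes summable: "summable (\<lambda>n. \<bar>fps_nth P n\<bar>)" "summable (\<lambda>n. \<bar>fps_nth Q n\<bar>)"
      "summable (\<lambda>n. \<bar>fps_nth U n\<bar>)" "summable (\<lambda>n. \<bar>fps_nth V n\<bar>)"
    and eq: "P * P = Q * Q + U * V"
  shows "uniform_limit (sphere 0 1) (\<lambda>L w. eval_trunc P L w * eval_trunc P L w -
    eval_trunc Q L w * eval_trunc Q L w - eval_trunc U L w * eval_trunc V L w) (\<lambda>_. 0) sequentially"
proof -
  define S where "S F w = (\<Sum>n. complex_of_real (fps_nth F n) * w ^ n)" for F and w :: complex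
  have "S P w * S P w - S Q w * S Q w - S U w * S V w = 0" if "w \<in> sphere 0 1" for w
  proof -
    have "(\<lambda>n. of_real (fps_nth (P * P) n) * w ^ n) sums (S Q w * S Q w + S U w * S V w)"
      unfolding eq fps_add_nth of_real_add distrib_right S_def
      using that summable by (intro sums_add sums_of_real_fps_mult) auto
    moreover have "(\<lambda>n. of_real (fps_nth (P * P) n) * w ^ n) sums (S P w * S P w)"
      unfolding S_def using that summable by (intro sums_of_real_fps_mult) auto
    ultimately have "S P w * S P w = S Q w * S Q w + S U w * S V w" by (metis sums_unique2)
    then show ?thesis by simp
  qed
  moreover have "uniform_limit (sphere 0 1) (\<lambda>L w. eval_trunc P L w * eval_trunc P L w -
      eval_trunc Q L w * eval_trunc Q L w - eval_trunc U L w * eval_trunc V L w)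
      (\<lambda>w. S P w * S P w - S Q w * S Q w - S U w * S V w) sequentially"
    unfolding S_def using summable by (intro uniform_limit_minus uniform_lim_mult uniform_limit_eval_trunc)
  ultimately show ?thesis
    by (rule uniform_limit_cong[OF always_eventually, THEN iffD1, rotated]) auto
qed

(* On the unit circle |P|^2 <= |Q|^2 + |U| |V|.  The truncated series satisfy this up to an error
   tending to 0 uniformly, and Parseval turns it into the inequality between coefficient norms. *)
lemma suminf_power2_le_if_square_eq:
  fixes P Q U V :: "real fps"
  assumes summable: "summable (\<lambda>n. \<bar>fps_nth P n\<bar>)" "summable (\<lambda>n. \<bar>fps_nth Q n\<bar>)"
      "summable (\<lambda>n. \<bar>fps_nth U n\<bar>)" "summable (\<lambda>n. \<bar>fps_nth V n\<bar>)"
    and eq: "P * P = Q * Q + U * V"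
  shows "(\<Sum>n. (fps_nth P n)\<^sup>2) \<le>
    (\<Sum>n. (fps_nth Q n)\<^sup>2) + sqrt (\<Sum>n. (fps_nth U n)\<^sup>2) * sqrt (\<Sum>n. (fps_nth V n)\<^sup>2)"
proof (rule field_le_epsilon)
  fix \<epsilon> :: real assume "0 < \<epsilon>"
  have "eventually (\<lambda>L. (\<Sum>n<L. (fps_nth P n)\<^sup>2) \<le> (\<Sum>n<L. (fps_nth Q n)\<^sup>2) +
      sqrt (\<Sum>n<L. (fps_nth U n)\<^sup>2) * sqrt (\<Sum>n<L. (fps_nth V n)\<^sup>2) + \<epsilon>) sequentially"
    using uniform_limitD[OF uniform_limit_eval_trunc_square_eq[OF summable eq] \<open>0 < \<epsilon>\<close>]
      eventually_gt_at_top[of 0]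
    by eventually_elim (auto intro!: sum_power2_le_if_circle_bound simp: dist_norm less_imp_le)
  moreover have "(\<lambda>L. \<Sum>n<L. (fps_nth P n)\<^sup>2) \<longlonglongrightarrow> (\<Sum>n. (fps_nth P n)\<^sup>2)"
    by (intro summable_LIMSEQ summable_power2_if_summable_abs summable)
  moreover have "(\<lambda>L. (\<Sum>n<L. (fps_nth Q n)\<^sup>2) +
      sqrt (\<Sum>n<L. (fps_nth U n)\<^sup>2) * sqrt (\<Sum>n<L. (fps_nth V n)\<^sup>2) + \<epsilon>) \<longlonglongrightarrow>
      (\<Sum>n. (fps_nth Q n)\<^sup>2) + sqrt (\<Sum>n. (fps_nth U n)\<^sup>2) * sqrt (\<Sum>n. (fps_nth V n)\<^sup>2) + \<epsilon>"
    by (intro tendsto_intros summable_LIMSEQ summable_power2_if_summable_abs summable)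
  ultimately show "(\<Sum>n. (fps_nth P n)\<^sup>2) \<le>
      (\<Sum>n. (fps_nth Q n)\<^sup>2) + sqrt (\<Sum>n. (fps_nth U n)\<^sup>2) * sqrt (\<Sum>n. (fps_nth V n)\<^sup>2) + \<epsilon>"
    by (intro tendsto_le[OF trivial_limit_sequentially]) auto
qed

lemma eval_fps_sq_coeffs_le_if_square_eq:
  fixes P Q U V :: "real fps"
  assumes radius: "1 \<le> fps_conv_radius P" "1 \<le> fps_conv_radius Q"
      "1 \<le> fps_conv_radius U" "1 \<le> fps_conv_radius V"
    and eq: "P * P = Q * Q + U * V" and x: "0 \<le> x" "x < 1"
  shows "eval_fps (fps_sq_coeffs P) x \<le> eval_fps (fps_sq_coeffs Q) x +
    sqrt (eval_fps (fps_sq_coeffs U) x) * sqrt (eval_fps (fps_sq_coeffs V) x)"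
proof -
  let ?d = "fps_dilate (sqrt x)"
  have "?d P * ?d P = ?d Q * ?d Q + ?d U * ?d V"
    by (simp flip: fps_dilate_mult fps_dilate_add add: eq)
  then show ?thesis
    unfolding eval_fps_sq_coeffs_eq_suminf_dilate[OF x(1)] using x
    by (intro suminf_power2_le_if_square_eq summable_abs_fps_dilate radius) auto
qed

section \<open>Multiplication by a block\<close>

definition fps_block :: "nat \<Rightarrow> real fps" where
  "fps_block M = Abs_fps (\<lambda>n. if n < M then 1 else 0)"

lemma fps_nth_block [simp]: "fps_nth (fps_block M) n = (if n < M then 1 else 0)"
  by (simp add: fps_block_def)

lemma fps_conv_radius_block: "1 \<le> fps_conv_radius (fps_block M)"
  by (rule fps_conv_radius_ge_1_if_bounded[of 0 _ 1]) simp

lemma eval_fps_block: "eval_fps (fps_block M) x = (\<Sum>n<M. x ^ n)"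
  unfolding eval_fps_def by (subst suminf_finite[of "{..<M}"]) auto

lemma eval_fps_block_bounds:
  assumes "0 \<le> x" "x \<le> 1"
  shows "M * x ^ M \<le> eval_fps (fps_block M) x" "eval_fps (fps_block M) x \<le> M"
proof -
  have "(\<Sum>n<M. x ^ M) \<le> (\<Sum>n<M. x ^ n)" by (intro sum_mono power_decreasing) (use assms in auto)
  then show "M * x ^ M \<le> eval_fps (fps_block M) x" by (simp add: eval_fps_block)
  have "(\<Sum>n<M. x ^ n) \<le> (\<Sum>n<M. 1)" by (intro sum_mono power_le_one) (use assms in auto)
  then show "eval_fps (fps_block M) x \<le> M" by (simp add: eval_fps_block)
qed

lemma fps_one_minus_X_mult_block: "(1 - fps_X) * fps_block M = 1 - fps_X ^ M"
proof (rule fps_ext)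
  fix n show "fps_nth ((1 - fps_X) * fps_block M) n = fps_nth (1 - fps_X ^ M) n"
    by (cases n) (auto simp: algebra_simps)
qed

lemma fps_nth_sq_coeffs_mult_block_le:
  "(fps_nth (f * fps_block M) n)\<^sup>2 \<le> M * fps_nth (fps_sq_coeffs f * fps_block M) n"
proof -
  define g where "g i = (if n - i < M then 1 else (0::real))" for i
  have "fps_nth (f * fps_block M) n = (\<Sum>i\<le>n. (fps_nth f i * g i) * g i)"
    by (auto simp: fps_mult_nth atLeast0AtMost g_def intro!: sum.cong)
  then have "(fps_nth (f * fps_block M) n)\<^sup>2 \<le> (\<Sum>i\<le>n. (fps_nth f i * g i)\<^sup>2) * (\<Sum>i\<le>n. (g i)\<^sup>2)"
    by (metis Cauchy_Schwarz_ineq_sum)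
  moreover have "(\<Sum>i\<le>n. (fps_nth f i * g i)\<^sup>2) = fps_nth (fps_sq_coeffs f * fps_block M) n"
    by (auto simp: fps_mult_nth atLeast0AtMost g_def power_mult_distrib intro!: sum.cong)
  moreover have "(\<Sum>i\<le>n. (g i)\<^sup>2) = (\<Sum>k\<le>n. if k < M then 1 else 0)"
    by (rule sum.reindex_bij_witness[of _ "\<lambda>k. n - k" "\<lambda>i. n - i"]) (auto simp: g_def)
  moreover have "(\<Sum>k\<le>n. if k < M then 1 else 0) = real (min (Suc n) M)"
    by (induction n) auto
  moreover have "0 \<le> (\<Sum>i\<le>n. (fps_nth f i * g i)\<^sup>2)" by (simp add: sum_nonneg)
  ultimately show ?thesis
    by (smt (verit) mult_left_mono of_nat_le_iff min.cobounded2 mult.commute)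
qed

lemma eval_fps_sq_coeffs_mult_block_le:
  fixes f :: "real fps"
  assumes f: "1 \<le> fps_conv_radius f" and x: "0 \<le> x" "x < 1"
  shows "eval_fps (fps_sq_coeffs (f * fps_block M)) x \<le> M\<^sup>2 * eval_fps (fps_sq_coeffs f) x"
proof -
  have radius: "1 \<le> fps_conv_radius (fps_sq_coeffs f * fps_block M)"
    "1 \<le> fps_conv_radius (fps_sq_coeffs (f * fps_block M))"
    by (intro fps_conv_radius_mult_ge fps_conv_radius_sq_coeffs fps_conv_radius_block f)+
  have summable: "summable (\<lambda>n. fps_nth (fps_sq_coeffs f * fps_block M) n * x ^ n)"
    "summable (\<lambda>n. fps_nth (fps_sq_coeffs (f * fps_block M)) n * x ^ n)"
    by (intro summable_fps norm_less_fps_conv_radius radius; use x in simp)+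
  have "eval_fps (fps_sq_coeffs (f * fps_block M)) x \<le>
      (\<Sum>n. M * (fps_nth (fps_sq_coeffs f * fps_block M) n * x ^ n))"
    unfolding eval_fps_def using summable x fps_nth_sq_coeffs_mult_block_le
    by (intro suminf_le summable_mult) (auto simp: mult.assoc[symmetric] intro!: mult_right_mono)
  also have "\<dots> = M * eval_fps (fps_sq_coeffs f * fps_block M) x"
    using summable(1) by (simp add: suminf_mult eval_fps_def)
  also have "\<dots> = M * (eval_fps (fps_sq_coeffs f) x * eval_fps (fps_block M) x)"
    by (subst eval_fps_mult; (rule norm_less_fps_conv_radius)?)
       (use x f in \<open>auto intro: fps_conv_radius_sq_coeffs fps_conv_radius_block\<close>)
  also have "\<dots> \<le> M * (eval_fps (fps_sq_coeffs f) x * M)"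
    using x f by (intro mult_left_mono eval_fps_block_bounds eval_fps_nonneg fps_conv_radius_sq_coeffs) auto
  finally show ?thesis by (simp add: power2_eq_square mult_ac)
qed

lemma eval_fps_sq_coeffs_block_diff_le:
  assumes "0 \<le> x" "x \<le> 1"
  shows "eval_fps (fps_sq_coeffs ((1 - fps_X) * fps_block M * fps_block M)) x \<le> 2 * M"
proof -
  define h where "h = (1 - fps_X) * fps_block M * fps_block M"
  have h_nth: "fps_nth h n = (if n < M then 1 else if n < 2 * M then - 1 else 0)" for n
    unfolding h_def fps_one_minus_X_mult_block by (auto simp: algebra_simps fps_X_power_mult_right_nth)
  have "eval_fps (fps_sq_coeffs h) x = (\<Sum>n<2 * M. (fps_nth h n)\<^sup>2 * x ^ n)"
    unfolding eval_fps_def by (subst suminf_finite[of "{..<2 * M}"]) (auto simp: h_nth)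
  also have "\<dots> \<le> (\<Sum>n<2 * M. 1)"
    using assms by (intro sum_mono) (auto simp: h_nth power_le_one)
  finally show ?thesis by (simp add: h_def)
qed

lemma block_bound_if_square_eq:
  fixes X B E :: "real fps"
  assumes X_Nats: "\<And>n. fps_nth X n \<in> \<nat>"
    and radius: "1 \<le> fps_conv_radius X" "1 \<le> fps_conv_radius B" "1 \<le> fps_conv_radius E"
    and eq: "X * X = B * B + (1 - fps_X) * E" and x: "0 \<le> x" "x < 1"
  shows "M * x ^ M * eval_fps X x \<le>
    M\<^sup>2 * eval_fps (fps_sq_coeffs B) x + sqrt (eval_fps (fps_sq_coeffs E) x) * sqrt (2 * M)"
proof -
  define G where "G = fps_block M"
  define H where "H = (1 - fps_X) * G * G"
  have rG: "1 \<le> fps_conv_radius G" unfolding G_def by (rule fps_conv_radius_block)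
  have rH: "1 \<le> fps_conv_radius H"
    unfolding H_def by (intro fps_conv_radius_mult_ge fps_conv_radius_diff_ge rG) simp_all
  have "(X * G) * (X * G) = (X * X) * (G * G)" by (simp add: mult_ac)
  also have "\<dots> = (B * B + (1 - fps_X) * E) * (G * G)" by (simp only: eq)
  also have "\<dots> = (B * G) * (B * G) + E * H" unfolding H_def by (simp add: algebra_simps)
  finally have eq_G: "(X * G) * (X * G) = (B * G) * (B * G) + E * H" .
  have "M * x ^ M * eval_fps X x \<le> eval_fps X x * eval_fps G x"
    using x radius(1) eval_fps_block_bounds(1)[of x M] X_Nats
    by (simp add: G_def mult.commute mult_left_mono eval_fps_nonneg Nats_nonneg)
  also have "\<dots> = eval_fps (X * G) x"
    by (rule eval_fps_mult[symmetric]; rule norm_less_fps_conv_radius) (use x radius rG in auto)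
  also have "\<dots> \<le> eval_fps (fps_sq_coeffs (X * G)) x"
    using x X_Nats by (intro eval_fps_le_sq_coeffs_if_Nats fps_nth_mult_in_Nats fps_conv_radius_mult_ge radius rG)
      (auto simp: G_def)
  also have "\<dots> \<le> eval_fps (fps_sq_coeffs (B * G)) x +
      sqrt (eval_fps (fps_sq_coeffs E) x) * sqrt (eval_fps (fps_sq_coeffs H) x)"
    using eq_G x by (intro eval_fps_sq_coeffs_le_if_square_eq fps_conv_radius_mult_ge radius rG rH)
  also have "\<dots> \<le> M\<^sup>2 * eval_fps (fps_sq_coeffs B) x + sqrt (eval_fps (fps_sq_coeffs E) x) * sqrt (2 * M)"
    unfolding G_def H_def using x eval_fps_sq_coeffs_mult_block_le[OF radius(2) x]
    by (intro add_mono mult_left_mono real_sqrt_le_mono eval_fps_sq_coeffs_block_diff_le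
        eval_fps_sq_coeffs_nonneg radius real_sqrt_ge_zero) auto
  finally show ?thesis by simp
qed

section \<open>The contradiction at a single point\<close>

lemma lower_bound_if_square_eq:
  fixes x F B E B2 E2 :: real
  assumes eq: "F\<^sup>2 = B\<^sup>2 + (1 - x) * E" and F: "0 \<le> F"
    and cs: "E\<^sup>2 \<le> E2 / (1 - x)" "B\<^sup>2 \<le> B2 / (1 - x)" and product: "E2 * B2 \<le> B ^ 3"
    and B: "1 \<le> B" and x: "x < 1"
  shows "B - 1 \<le> F"
proof -
  have B2: "(1 - x) * B\<^sup>2 \<le> B2" using cs(2) x by (simp add: pos_le_divide_eq mult.commute)
  have "((1 - x) * E2) * B2 = (1 - x) * (E2 * B2)" by (simp add: mult_ac)
  also have "\<dots> \<le> (1 - x) * B ^ 3" using product x by (intro mult_left_mono) auto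
  also have "\<dots> = B * ((1 - x) * B\<^sup>2)" by (simp add: power2_eq_square power3_eq_cube mult_ac)
  also have "\<dots> \<le> B * B2" using B2 B by (intro mult_left_mono) auto
  finally have "((1 - x) * E2) * B2 \<le> B * B2" .
  moreover have "0 < (1 - x) * B\<^sup>2" using x B by simp
  ultimately have E2: "(1 - x) * E2 \<le> B" using B2 by simp
  have "((1 - x) * E)\<^sup>2 = (1 - x)\<^sup>2 * E\<^sup>2" by (simp add: power_mult_distrib)
  also have "\<dots> \<le> (1 - x)\<^sup>2 * (E2 / (1 - x))" using cs(1) by (intro mult_left_mono) auto
  also have "\<dots> = (1 - x) * E2" using x by (simp add: power2_eq_square)
  also have "\<dots> \<le> B\<^sup>2" using E2 B by (simp add: power2_eq_square) (smt (verit) mult_le_cancel_left1)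
  finally have "- B \<le> (1 - x) * E" using B abs_le_square_iff[of "(1 - x) * E" B] by simp
  then have "(B - 1)\<^sup>2 \<le> F\<^sup>2" using eq B by (simp add: power2_eq_square algebra_simps)
  then show ?thesis using F B by (simp add: abs_le_square_iff)
qed

lemma exists_block_length:
  fixes x F B B2 E2 \<delta> :: real
  assumes block: "\<And>M. M * x ^ M * F \<le> M\<^sup>2 * B2 + sqrt E2 * sqrt (2 * M)"
    and \<delta>: "0 < \<delta>" "\<delta> < 1" and B2: "0 < B2" "B2 \<le> \<delta> * B" and E2: "0 \<le> E2"
    and product: "E2 * B2 \<le> \<delta> * (1 - \<delta>)\<^sup>2 / 16 * B ^ 3"
  shows "\<exists>M. real M \<le> \<delta> * B / B2 \<and> x ^ M * F \<le> \<delta> * B + (1 - \<delta>) * B / 2"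
proof -
  define y where "y = \<delta> * B / B2"
  have y: "1 \<le> y" using B2 by (simp add: y_def)
  have B: "0 < B" using B2 \<delta> by (smt (verit) mult_pos_pos zero_less_mult_pos)
  define M where "M = nat \<lfloor>y\<rfloor>"
  have "1 \<le> M" "real M \<le> y" "y - 1 < real M"
    using y by (simp_all add: M_def le_nat_iff)
  then have M: "1 \<le> M" "real M \<le> y" "y / 2 \<le> M" by linarith+
  have MB2: "M * B2 \<le> \<delta> * B"
    using M(2) B2 by (simp add: y_def pos_le_divide_eq)
  have sqrt_E2: "sqrt E2 * sqrt (2 * M) \<le> M * ((1 - \<delta>) * B / 2)"
  proof -
    have "2 * E2 * B2 \<le> 2 * (\<delta> * (1 - \<delta>)\<^sup>2 / 16 * B ^ 3)" using product by linarith
    also have "\<dots> = (y / 2) * ((1 - \<delta>)\<^sup>2 * B\<^sup>2 / 4) * B2"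
      using B2 by (simp add: y_def field_simps power2_eq_square power3_eq_cube)
    also have "\<dots> \<le> M * ((1 - \<delta>)\<^sup>2 * B\<^sup>2 / 4) * B2"
      using M(3) B2 by (intro mult_right_mono) auto
    finally have "2 * M * E2 \<le> (M * ((1 - \<delta>) * B / 2))\<^sup>2"
      using B2 M(1) by (simp add: power2_eq_square mult_ac)
    then have "sqrt (2 * M * E2) \<le> M * ((1 - \<delta>) * B / 2)"
      using \<delta> B by (intro real_le_lsqrt) auto
    then show ?thesis by (simp add: real_sqrt_mult mult_ac)
  qed
  have "M * (x ^ M * F) \<le> M * (M * B2) + M * ((1 - \<delta>) * B / 2)"
    using block[of M] sqrt_E2 by (simp add: power2_eq_square mult_ac)
  also have "\<dots> \<le> M * (\<delta> * B) + M * ((1 - \<delta>) * B / 2)"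
    using MB2 by (intro add_right_mono mult_left_mono) auto
  finally have "M * (x ^ M * F) \<le> M * (\<delta> * B + (1 - \<delta>) * B / 2)"
    by (simp add: distrib_left)
  then show ?thesis using M by (intro exI[of _ M]) (auto simp: y_def)
qed

lemma block_estimates_contradiction:
  fixes x F B E B2 E2 \<delta> :: real
  assumes x: "0 < x" "x < 1" and \<delta>: "0 < \<delta>" "\<delta> < 1"
    and block: "\<And>M. M * x ^ M * F \<le> M\<^sup>2 * B2 + sqrt E2 * sqrt (2 * M)"
    and eq: "F\<^sup>2 = B\<^sup>2 + (1 - x) * E" and F: "0 \<le> F"
    and cs: "E\<^sup>2 \<le> E2 / (1 - x)" "B\<^sup>2 \<le> B2 / (1 - x)"
    and small: "B2 \<le> \<delta> * B" and product: "E2 * B2 \<le> \<delta> * (1 - \<delta>)\<^sup>2 / 16 * B ^ 3"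
    and large: "4 / (1 - \<delta>) < B"
  shows False
proof -
  have "4 < 4 / (1 - \<delta>)" using \<delta> by (simp add: less_divide_eq)
  then have B: "1 \<le> B" using large by linarith
  have B_B2: "(1 - x) * B \<le> B2 / B"
    using cs(2) x B by (simp add: pos_le_divide_eq power2_eq_square mult_ac)
  then have B2: "0 < B2" using x B by (smt (verit) divide_nonpos_pos mult_pos_pos)
  have E2: "0 \<le> E2" using cs(1) x by (smt (verit) divide_less_0_iff zero_le_power2)
  obtain M where M: "real M \<le> \<delta> * B / B2" "x ^ M * F \<le> \<delta> * B + (1 - \<delta>) * B / 2"
    using exists_block_length[OF block \<delta> B2 small E2 product] by blast
  have "\<delta> * (1 - \<delta>)\<^sup>2 \<le> 1" using \<delta> by (intro mult_le_one power_le_one) auto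
  then have "\<delta> * (1 - \<delta>)\<^sup>2 / 16 * B ^ 3 \<le> 1 * B ^ 3" using B by (intro mult_right_mono) auto
  then have "E2 * B2 \<le> B ^ 3" using product by linarith
  then have lower: "B - 1 \<le> F" using lower_bound_if_square_eq[OF eq F cs _ B x(2)] by blast
  have "real M * (1 - x) \<le> \<delta> * B / B2 * (1 - x)" using M(1) x by (intro mult_right_mono) auto
  also have "\<dots> = \<delta> * ((1 - x) * B) / B2" by simp
  also have "\<dots> \<le> \<delta> * (B2 / B) / B2" using B_B2 \<delta> B2 by (intro divide_right_mono mult_left_mono) auto
  also have "\<dots> = \<delta> / B" using B2 by simp
  also have "\<dots> \<le> 1 / B" using \<delta> B by (simp add: divide_right_mono)
  finally have "1 - 1 / B \<le> x ^ M"
    using Bernoulli_inequality[of "x - 1" M] x by (simp add: algebra_simps)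
  then have "(1 - 1 / B) * (B - 1) \<le> \<delta> * B + (1 - \<delta>) * B / 2"
    using M(2) lower B by (smt (verit) mult_mono divide_le_eq_1 zero_le_one)
  moreover have "(1 - 1 / B) * (B - 1) = B - 2 + 1 / B" using B by (simp add: field_simps)
  moreover have "0 < 1 / B" using B by simp
  moreover have "(1 - \<delta>) * B / 2 = B / 2 - \<delta> * B / 2" by (simp add: diff_divide_distrib left_diff_distrib)
  ultimately have "B - \<delta> * B < 4" by linarith
  with large \<delta> show False by (simp add: field_simps)
qed

lemma square_eq_contradiction_at_point:
  fixes X B E :: "real fps" and x \<delta> :: real
  assumes X_Nats: "\<And>n. fps_nth X n \<in> \<nat>"
    and radius: "1 \<le> fps_conv_radius X" "1 \<le> fps_conv_radius B" "1 \<le> fps_conv_radius E"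
    and eq: "X * X = B * B + (1 - fps_X) * E"
    and x: "0 < x" "x < 1" and \<delta>: "0 < \<delta>" "\<delta> < 1"
    and small: "eval_fps (fps_sq_coeffs B) x \<le> \<delta> * eval_fps B x"
    and product: "eval_fps (fps_sq_coeffs E) x * eval_fps (fps_sq_coeffs B) x
      \<le> \<delta> * (1 - \<delta>)\<^sup>2 / 16 * eval_fps B x ^ 3"
    and large: "4 / (1 - \<delta>) < eval_fps B x"
  shows False
proof (rule block_estimates_contradiction[OF x \<delta> _ _ _ _ _ small product large])
  have lt: "norm x < fps_conv_radius F" if "1 \<le> fps_conv_radius F" for F :: "real fps"
    using that x by (intro norm_less_fps_conv_radius) auto
  have r1X: "1 \<le> fps_conv_radius (1 - fps_X :: real fps)" by (intro fps_conv_radius_diff_ge) simp_all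
  have "eval_fps (X * X) x = eval_fps (B * B) x + eval_fps ((1 - fps_X) * E) x"
    unfolding eq by (intro eval_fps_add lt fps_conv_radius_mult_ge radius r1X)
  moreover have "eval_fps (B * B) x = (eval_fps B x)\<^sup>2"
    unfolding power2_eq_square by (intro eval_fps_mult lt radius)
  moreover have "eval_fps ((1 - fps_X) * E) x = (1 - x) * eval_fps E x"
    using eval_fps_mult[OF lt[OF r1X] lt[OF radius(3)]] by (simp add: eval_fps_diff)
  moreover have "eval_fps (X * X) x = (eval_fps X x)\<^sup>2"
    unfolding power2_eq_square by (intro eval_fps_mult lt radius)
  ultimately show "(eval_fps X x)\<^sup>2 = (eval_fps B x)\<^sup>2 + (1 - x) * eval_fps E x"
    by simp
  show "0 \<le> eval_fps X x"
    using radius x by (intro eval_fps_nonneg Nats_nonneg[OF X_Nats]) auto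
  show "\<And>M. M * x ^ M * eval_fps X x \<le>
      M\<^sup>2 * eval_fps (fps_sq_coeffs B) x + sqrt (eval_fps (fps_sq_coeffs E) x) * sqrt (2 * M)"
    using block_bound_if_square_eq[OF X_Nats radius eq] x by auto
  show "(eval_fps E x)\<^sup>2 \<le> eval_fps (fps_sq_coeffs E) x / (1 - x)"
    "(eval_fps B x)\<^sup>2 \<le> eval_fps (fps_sq_coeffs B) x / (1 - x)"
    using x by (intro eval_fps_square_le radius; simp)+
qed

section \<open>Abelian estimates\<close>

lemma partial_sums_mono_from:
  fixes b :: "nat \<Rightarrow> real"
  assumes "\<And>n. n0 \<le> n \<Longrightarrow> 0 < b n" "n0 \<le> i" "i \<le> j"
  shows "(\<Sum>k\<le>i. b k) \<le> (\<Sum>k\<le>j. b k)"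
  using assms by (intro sum_mono2) (auto intro: less_imp_le)

lemma suminf_power2_le_if_eventually_less:
  fixes b :: "nat \<Rightarrow> real" and \<beta> x :: real
  assumes b: "\<And>n. n0 \<le> n \<Longrightarrow> 0 < b n \<and> b n < \<beta>" and x: "0 \<le> x" "x \<le> 1"
    and summable: "summable (\<lambda>n. b n * x ^ n)" "summable (\<lambda>n. (b n)\<^sup>2 * x ^ n)"
  shows "(\<Sum>n. (b n)\<^sup>2 * x ^ n) \<le> \<beta> * (\<Sum>n. b n * x ^ n) + (\<Sum>n<n0. \<bar>(b n)\<^sup>2 - \<beta> * b n\<bar>)"
proof -
  define k where "k n = (if n < n0 then \<bar>(b n)\<^sup>2 - \<beta> * b n\<bar> else 0)" for n
  have k: "k sums (\<Sum>n<n0. \<bar>(b n)\<^sup>2 - \<beta> * b n\<bar>)"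
    by (rule sums_If_finite_set'[where A = "{..<n0}", THEN sums_cong[THEN iffD1, rotated]]) (auto simp: k_def)
  have "(b n)\<^sup>2 * x ^ n \<le> \<beta> * (b n * x ^ n) + k n" for n
  proof (cases "n < n0")
    case True
    have "((b n)\<^sup>2 - \<beta> * b n) * x ^ n \<le> \<bar>(b n)\<^sup>2 - \<beta> * b n\<bar> * 1"
      using x by (intro mult_mono power_le_one) auto
    then show ?thesis using True by (simp add: k_def algebra_simps)
  next
    case False
    then have "b n * b n \<le> \<beta> * b n" using b[of n] by (intro mult_right_mono) auto
    then show ?thesis using False x by (simp add: k_def power2_eq_square mult_right_mono mult.assoc[symmetric])
  qed
  then show ?thesis
    using summable by (intro sums_le[OF _ summable_sums sums_add[OF sums_mult k]]) auto
qed

lemma power_mult_partial_sum_le_suminf: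
  fixes b :: "nat \<Rightarrow> real"
  assumes b: "\<And>n. n0 \<le> n \<Longrightarrow> 0 < b n" and x: "0 \<le> x" "x \<le> 1"
    and summable: "summable (\<lambda>n. b n * x ^ n)" and N: "n0 \<le> N"
  shows "x ^ N * (\<Sum>k\<le>N. b k) - 2 * (\<Sum>n<n0. \<bar>b n\<bar>) \<le> (\<Sum>n. b n * x ^ n)"
proof -
  have "x ^ N * b n - (if n < n0 then 2 * \<bar>b n\<bar> else 0) \<le> b n * x ^ n" if "n \<le> N" for n
  proof (cases "n < n0")
    case True
    have "\<bar>x ^ N * b n\<bar> \<le> \<bar>b n\<bar>" "\<bar>b n * x ^ n\<bar> \<le> \<bar>b n\<bar>"
      using x by (auto simp: abs_mult power_le_one mult_left_le_one_le mult_left_le)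
    then show ?thesis using True by (simp add: abs_le_iff)
  next
    case False
    then have "x ^ N * b n \<le> x ^ n * b n"
      using b[of n] x that by (intro mult_right_mono power_decreasing) auto
    then show ?thesis using False by (simp add: mult.commute)
  qed
  then have "(\<Sum>n\<le>N. x ^ N * b n - (if n < n0 then 2 * \<bar>b n\<bar> else 0)) \<le> (\<Sum>n\<le>N. b n * x ^ n)"
    by (intro sum_mono) auto
  also have "\<dots> \<le> (\<Sum>n. b n * x ^ n)"
  proof (rule sum_le_suminf[OF summable])
    fix n assume "n \<in> - {..N}"
    then have "0 < b n" using b N by simp
    then show "0 \<le> b n * x ^ n" using x by simp
  qed simp
  moreover have "(\<Sum>n\<le>N. if n < n0 then 2 * \<bar>b n\<bar> else 0) = (\<Sum>n<n0. 2 * \<bar>b n\<bar>)"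
  proof -
    have "{n \<in> {..N}. n < n0} = {..<n0}" using N by auto
    then show ?thesis by (simp flip: sum.inter_filter)
  qed
  ultimately show ?thesis by (simp add: sum_subtractf sum_distrib_left)
qed

lemma doubling_weighted_le:
  fixes g :: "nat \<Rightarrow> real"
  assumes mono: "\<And>i j. J \<le> i \<Longrightarrow> i \<le> j \<Longrightarrow> g i \<le> g j"
    and doubling: "\<And>n. J \<le> n \<Longrightarrow> g (2 * n) \<le> D * g n"
    and nonneg: "\<And>n. J \<le> n \<Longrightarrow> 0 \<le> g n"
    and s: "0 < s" "s < 1" "s ^ N * D = 1" and N: "J \<le> N" "0 < N"
  shows "J \<le> j \<Longrightarrow> g j * s ^ j \<le> D * g N"
proof (induction j rule: less_induct)
  case (less j)
  show ?case
  proof (cases "j < 2 * N")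
    case True
    have "g j * s ^ j \<le> g j * 1"
      using nonneg[OF less.prems] s by (intro mult_left_mono power_le_one) auto
    also have "\<dots> \<le> g (2 * N)" using mono[OF less.prems, of "2 * N"] True by simp
    also have "\<dots> \<le> D * g N" by (rule doubling[OF N(1)])
    finally show ?thesis .
  next
    case False
    define i where "i = (j + 1) div 2"
    have i: "N \<le> i" "i < j" "j \<le> 2 * i" "N \<le> j - i" "J \<le> i"
      using False N unfolding i_def by presburger+
    have "g j \<le> D * g i" using mono[OF less.prems i(3)] doubling[OF i(5)] by linarith
    moreover have "s ^ j \<le> s ^ i * s ^ N"
      using s i by (simp add: power_add[symmetric] power_decreasing)
    ultimately have "g j * s ^ j \<le> (D * g i) * (s ^ i * s ^ N)"
      using nonneg[OF less.prems] s by (intro mult_mono) auto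
    also have "\<dots> = g i * s ^ i" using s(3) by (simp add: mult_ac)
    also have "\<dots> \<le> D * g N" using less.IH i by blast
    finally show ?thesis .
  qed
qed

lemma fps_nth_mult_mono_weighted_le:
  fixes f g :: "nat \<Rightarrow> real"
  assumes mono: "mono f" "mono g" and nonneg: "\<And>n. 0 \<le> f n" "\<And>n. 0 \<le> g n"
    and small: "\<And>m. m < J \<Longrightarrow> f m * g m \<le> K" and weighted: "\<And>m. J \<le> m \<Longrightarrow> f m * g m * s ^ m \<le> c"
    and K: "0 \<le> K" and c: "0 \<le> c" and s: "0 < s" "s < 1"
  shows "fps_nth (Abs_fps f * Abs_fps g) n * (s\<^sup>2) ^ n \<le>
    K * (of_nat (Suc n) * (s\<^sup>2) ^ n) + c * (of_nat (Suc n) * s ^ n)"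
proof -
  have "fps_nth (Abs_fps f * Abs_fps g) n = (\<Sum>i\<le>n. f i * g (n - i))"
    by (simp add: fps_mult_nth atLeast0AtMost)
  also have "\<dots> \<le> (\<Sum>i\<le>n. f n * g n)"
    using mono nonneg by (intro sum_mono mult_mono) (auto simp: mono_def)
  finally have coeff: "fps_nth (Abs_fps f * Abs_fps g) n \<le> of_nat (Suc n) * (f n * g n)" by simp
  have power: "(s\<^sup>2) ^ n = s ^ n * s ^ n" by (simp add: power2_eq_square power_mult_distrib)
  have "f n * g n * (s\<^sup>2) ^ n \<le> K * (s\<^sup>2) ^ n + c * s ^ n"
  proof (cases "n < J")
    case True
    then have "f n * g n * (s\<^sup>2) ^ n \<le> K * (s\<^sup>2) ^ n" using small by (simp add: mult_right_mono)
    moreover have "0 \<le> c * s ^ n" using c s by simp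
    ultimately show ?thesis by linarith
  next
    case False
    then have "f n * g n * (s\<^sup>2) ^ n \<le> c * s ^ n"
      unfolding power using weighted[of n] s by (simp add: mult.assoc[symmetric] mult_right_mono)
    moreover have "0 \<le> K * (s\<^sup>2) ^ n" using K by simp
    ultimately show ?thesis by linarith
  qed
  then have "of_nat (Suc n) * (f n * g n) * (s\<^sup>2) ^ n \<le> of_nat (Suc n) * (K * (s\<^sup>2) ^ n + c * s ^ n)"
    by (simp add: mult.assoc mult_left_mono)
  moreover have "fps_nth (Abs_fps f * Abs_fps g) n * (s\<^sup>2) ^ n \<le> of_nat (Suc n) * (f n * g n) * (s\<^sup>2) ^ n"
    using coeff by (rule mult_right_mono) simp
  ultimately show ?thesis by (simp add: algebra_simps)
qed

lemma one_minus_square_weighted_le: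
  fixes s K c :: real
  assumes "0 < s" "s < 1" "0 \<le> c"
  shows "(1 - s\<^sup>2)\<^sup>2 * (K * (1 / (1 - s\<^sup>2)\<^sup>2) + c * (1 / (1 - s)\<^sup>2)) \<le> K + 4 * c"
proof -
  have "1 - s\<^sup>2 = (1 - s) * (1 + s)" by (simp add: power2_eq_square algebra_simps)
  then have "(1 - s\<^sup>2)\<^sup>2 * (c * (1 / (1 - s)\<^sup>2)) = c * (1 + s)\<^sup>2"
    using assms by (simp add: power_mult_distrib)
  moreover have "s\<^sup>2 < 1" using assms by (simp add: abs_square_less_1)
  then have "(1 - s\<^sup>2)\<^sup>2 * (K * (1 / (1 - s\<^sup>2)\<^sup>2)) = K" by simp
  moreover have "c * (1 + s)\<^sup>2 \<le> c * 2\<^sup>2"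
    using assms by (intro mult_left_mono power_mono) auto
  ultimately show ?thesis by (simp add: distrib_left)
qed

lemma eval_fps_mult_mono_le:
  fixes f g :: "nat \<Rightarrow> real"
  assumes mono: "mono f" "mono g" and nonneg: "\<And>n. 0 \<le> f n" "\<And>n. 0 \<le> g n"
    and radius: "1 \<le> fps_conv_radius (Abs_fps f)" "1 \<le> fps_conv_radius (Abs_fps g)"
    and small: "\<And>m. m < J \<Longrightarrow> f m * g m \<le> K" and weighted: "\<And>m. J \<le> m \<Longrightarrow> f m * g m * s ^ m \<le> c"
    and K: "0 \<le> K" and c: "0 \<le> c" and s: "0 < s" "s < 1"
  shows "(1 - s\<^sup>2)\<^sup>2 * eval_fps (Abs_fps f * Abs_fps g) (s\<^sup>2) \<le> K + 4 * c"
proof -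
  have x: "0 < s\<^sup>2" "s\<^sup>2 < 1" using s by (auto simp: abs_square_less_1)
  have sums: "(\<lambda>n. of_nat (Suc n) * (s\<^sup>2) ^ n) sums (1 / (1 - s\<^sup>2)\<^sup>2)"
    "(\<lambda>n. of_nat (Suc n) * s ^ n) sums (1 / (1 - s)\<^sup>2)"
    using x s by (intro geometric_deriv_sums; simp)+
  have "summable (\<lambda>n. fps_nth (Abs_fps f * Abs_fps g) n * (s\<^sup>2) ^ n)"
    by (intro summable_fps norm_less_fps_conv_radius fps_conv_radius_mult_ge radius) (use x in auto)
  then have "eval_fps (Abs_fps f * Abs_fps g) (s\<^sup>2) \<le> K * (1 / (1 - s\<^sup>2)\<^sup>2) + c * (1 / (1 - s)\<^sup>2)"
    unfolding eval_fps_def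
    by (intro sums_le[OF fps_nth_mult_mono_weighted_le[OF mono nonneg small weighted K c s]
          summable_sums sums_add] sums_mult sums)
  then have "(1 - s\<^sup>2)\<^sup>2 * eval_fps (Abs_fps f * Abs_fps g) (s\<^sup>2) \<le>
      (1 - s\<^sup>2)\<^sup>2 * (K * (1 / (1 - s\<^sup>2)\<^sup>2) + c * (1 / (1 - s)\<^sup>2))"
    by (intro mult_left_mono) auto
  also have "\<dots> \<le> K + 4 * c" using s c by (rule one_minus_square_weighted_le)
  finally show ?thesis .
qed

lemma eval_fps_sq_coeffs_product_le:
  fixes b e :: "nat \<Rightarrow> real" and s D \<eta> :: real
  assumes radius: "1 \<le> fps_conv_radius (Abs_fps b)" "1 \<le> fps_conv_radius (Abs_fps e)"
    and pos: "\<And>m. J \<le> m \<Longrightarrow> 0 < (\<Sum>k\<le>m. b k)"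
    and mono: "\<And>i j. J \<le> i \<Longrightarrow> i \<le> j \<Longrightarrow> (\<Sum>k\<le>i. b k) \<le> (\<Sum>k\<le>j. b k)"
    and doubling: "\<And>m. J \<le> m \<Longrightarrow> (\<Sum>k\<le>2 * m. b k) ^ 3 \<le> D * (\<Sum>k\<le>m. b k) ^ 3"
    and ratio: "\<And>m. J \<le> m \<Longrightarrow> (\<Sum>k\<le>m. (e k)\<^sup>2) * (\<Sum>k\<le>m. (b k)\<^sup>2) \<le> \<eta> * (\<Sum>k\<le>m. b k) ^ 3"
    and s: "0 < s" "s < 1" "s ^ N * D = 1" and N: "J \<le> N" "0 < N" and \<eta>: "0 \<le> \<eta>"
  shows "eval_fps (fps_sq_coeffs (Abs_fps e)) (s\<^sup>2) * eval_fps (fps_sq_coeffs (Abs_fps b)) (s\<^sup>2) \<le>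
    (\<Sum>m<J. (\<Sum>k\<le>m. (e k)\<^sup>2) * (\<Sum>k\<le>m. (b k)\<^sup>2)) + 4 * (\<eta> * D * (\<Sum>k\<le>N. b k) ^ 3)"
proof -
  define E2s B2s where "E2s = (\<lambda>m. \<Sum>k\<le>m. (e k)\<^sup>2)" and "B2s = (\<lambda>m. \<Sum>k\<le>m. (b k)\<^sup>2)"
  have nonneg: "0 \<le> E2s n" "0 \<le> B2s n" for n by (simp_all add: E2s_def B2s_def sum_nonneg)
  have weighted: "E2s m * B2s m * s ^ m \<le> \<eta> * D * (\<Sum>k\<le>N. b k) ^ 3" if "J \<le> m" for m
  proof -
    have "(\<Sum>k\<le>m. b k) ^ 3 * s ^ m \<le> D * (\<Sum>k\<le>N. b k) ^ 3"
      using doubling_weighted_le[of J "\<lambda>m. (\<Sum>k\<le>m. b k) ^ 3", OF _ doubling _ s N that] mono pos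
      by (simp add: power_mono less_imp_le)
    then show ?thesis
      using ratio[OF that] s \<eta> unfolding E2s_def B2s_def
      by (smt (verit) mult_left_mono mult_right_mono zero_le_power mult.assoc)
  qed
  have "0 < D" using s by (metis zero_less_mult_pos zero_less_one zero_less_power)
  have "(1 - s\<^sup>2)\<^sup>2 * eval_fps (Abs_fps E2s * Abs_fps B2s) (s\<^sup>2) \<le>
      (\<Sum>m<J. E2s m * B2s m) + 4 * (\<eta> * D * (\<Sum>k\<le>N. b k) ^ 3)"
  proof (rule eval_fps_mult_mono_le[OF _ _ nonneg _ _ _ weighted _ _ s(1,2)])
    show "mono E2s" "mono B2s" unfolding E2s_def B2s_def by (intro monoI sum_mono2; simp)+
    show "1 \<le> fps_conv_radius (Abs_fps E2s)" "1 \<le> fps_conv_radius (Abs_fps B2s)"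
      using fps_conv_radius_partial_sums[OF fps_conv_radius_sq_coeffs[OF radius(1)]]
        fps_conv_radius_partial_sums[OF fps_conv_radius_sq_coeffs[OF radius(2)]]
      by (simp_all add: E2s_def B2s_def)
    show "E2s m * B2s m \<le> (\<Sum>m<J. E2s m * B2s m)" if "m < J" for m
      using that nonneg by (intro member_le_sum) auto
    show "0 \<le> (\<Sum>m<J. E2s m * B2s m)" by (intro sum_nonneg mult_nonneg_nonneg nonneg)
    show "0 \<le> \<eta> * D * (\<Sum>k\<le>N. b k) ^ 3" using pos[OF N(1)] \<eta> \<open>0 < D\<close> by simp
  qed
  then show ?thesis
    using eval_fps_sq_coeffs_mult_eq_partial_sums[OF radius(2,1), of "s\<^sup>2"] s
    by (simp add: E2s_def B2s_def abs_square_less_1)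
qed

lemma eventually_cube_doubling:
  fixes A :: "nat \<Rightarrow> real"
  assumes pos: "eventually (\<lambda>n. 0 < A n) sequentially"
    and doubling: "eventually (\<lambda>n. A (2 * n) / A n < C) sequentially"
  shows "eventually (\<lambda>n. A (2 * n) ^ 3 \<le> max 2 (C ^ 3) * A n ^ 3) sequentially"
proof -
  obtain N where N: "\<And>n. N \<le> n \<Longrightarrow> 0 < A n" using pos by (auto simp: eventually_sequentially)
  then have "eventually (\<lambda>n. 0 < A (2 * n)) sequentially"
    by (auto simp: eventually_sequentially intro!: exI[of _ N])
  with pos doubling show ?thesis
  proof eventually_elim
    case (elim n)
    then have "A (2 * n) ^ 3 \<le> (C * A n) ^ 3" by (intro power_mono) (auto simp: pos_divide_less_eq)
    also have "\<dots> \<le> max 2 (C ^ 3) * A n ^ 3"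
      using elim by (simp add: power_mult_distrib mult_right_mono)
    finally show ?case .
  qed
qed

lemma eventually_partial_sums_estimates:
  fixes b e :: "nat \<Rightarrow> real" and C \<eta> :: real
  assumes unbounded: "filterlim (\<lambda>n. \<Sum>k\<le>n. b k) at_top sequentially"
    and doubling: "eventually (\<lambda>n. (\<Sum>k\<le>2 * n. b k) / (\<Sum>k\<le>n. b k) < C) sequentially"
    and ratio: "((\<lambda>n. (\<Sum>k\<le>n. (b k)\<^sup>2) * (\<Sum>k\<le>n. (e k)\<^sup>2) / (\<Sum>k\<le>n. b k) ^ 3) \<longlongrightarrow> 0) sequentially"
    and \<eta>: "0 < \<eta>"
  shows "eventually (\<lambda>m. 0 < (\<Sum>k\<le>m. b k) \<and>
    (\<Sum>k\<le>2 * m. b k) ^ 3 \<le> max 2 (C ^ 3) * (\<Sum>k\<le>m. b k) ^ 3 \<and>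
    (\<Sum>k\<le>m. (e k)\<^sup>2) * (\<Sum>k\<le>m. (b k)\<^sup>2) \<le> \<eta> * (\<Sum>k\<le>m. b k) ^ 3) sequentially"
proof -
  have pos: "eventually (\<lambda>m. 0 < (\<Sum>k\<le>m. b k)) sequentially"
    using unbounded by (simp add: filterlim_at_top_dense)
  with eventually_cube_doubling[OF pos doubling] order_tendstoD(2)[OF ratio \<eta>] show ?thesis
    by eventually_elim (simp add: pos_divide_less_eq mult.commute)
qed

lemma exists_point_at_scale:
  fixes b e :: "nat \<Rightarrow> real" and D \<eta> :: real
  assumes b_pos: "\<And>n. n0 \<le> n \<Longrightarrow> 0 < b n"
    and radius: "1 \<le> fps_conv_radius (Abs_fps b)" "1 \<le> fps_conv_radius (Abs_fps e)"
    and estimates: "\<And>m. J \<le> m \<Longrightarrow> 0 < (\<Sum>k\<le>m. b k) \<and>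
      (\<Sum>k\<le>2 * m. b k) ^ 3 \<le> D * (\<Sum>k\<le>m. b k) ^ 3 \<and>
      (\<Sum>k\<le>m. (e k)\<^sup>2) * (\<Sum>k\<le>m. (b k)\<^sup>2) \<le> \<eta> * (\<Sum>k\<le>m. b k) ^ 3"
    and J: "n0 \<le> J" "J \<le> N" "0 < N" and D: "1 < D" and \<eta>: "0 \<le> \<eta>"
  shows "\<exists>x. 0 < x \<and> x < 1 \<and>
    (\<Sum>k\<le>N. b k) / D\<^sup>2 - 2 * (\<Sum>n<n0. \<bar>b n\<bar>) \<le> eval_fps (Abs_fps b) x \<and>
    eval_fps (fps_sq_coeffs (Abs_fps e)) x * eval_fps (fps_sq_coeffs (Abs_fps b)) x \<le>
      (\<Sum>m<J. (\<Sum>k\<le>m. (e k)\<^sup>2) * (\<Sum>k\<le>m. (b k)\<^sup>2)) + 4 * (\<eta> * D * (\<Sum>k\<le>N. b k) ^ 3)"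
proof (intro exI conjI)
  define s where "s = root N (1 / D)"
  have s: "0 < s" "s < 1" "s ^ N * D = 1" using J D by (auto simp: s_def)
  show x: "0 < s\<^sup>2" "s\<^sup>2 < 1" using s by (auto simp: abs_square_less_1)
  have "(s\<^sup>2) ^ N = (s ^ N)\<^sup>2" by (simp only: power_mult[symmetric] mult.commute)
  also have "s ^ N = 1 / D" using s(3) D by (simp add: eq_divide_eq mult.commute)
  finally have "(s\<^sup>2) ^ N * (\<Sum>k\<le>N. b k) = (\<Sum>k\<le>N. b k) / D\<^sup>2" by (simp add: power_divide)
  moreover have "(s\<^sup>2) ^ N * (\<Sum>k\<le>N. b k) - 2 * (\<Sum>n<n0. \<bar>b n\<bar>) \<le> eval_fps (Abs_fps b) (s\<^sup>2)"
    unfolding eval_fps_def fps_nth_Abs_fps using J x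
    by (intro power_mult_partial_sum_le_suminf[OF b_pos] summable_fps[OF norm_less_fps_conv_radius[OF radius(1)], simplified]) auto
  ultimately show "(\<Sum>k\<le>N. b k) / D\<^sup>2 - 2 * (\<Sum>n<n0. \<bar>b n\<bar>) \<le> eval_fps (Abs_fps b) (s\<^sup>2)" by simp
  show "eval_fps (fps_sq_coeffs (Abs_fps e)) (s\<^sup>2) * eval_fps (fps_sq_coeffs (Abs_fps b)) (s\<^sup>2) \<le>
      (\<Sum>m<J. (\<Sum>k\<le>m. (e k)\<^sup>2) * (\<Sum>k\<le>m. (b k)\<^sup>2)) + 4 * (\<eta> * D * (\<Sum>k\<le>N. b k) ^ 3)"
  proof (rule eval_fps_sq_coeffs_product_le[OF radius _ _ _ _ s J(2,3) \<eta>])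
    show "\<And>i j. J \<le> i \<Longrightarrow> i \<le> j \<Longrightarrow> (\<Sum>k\<le>i. b k) \<le> (\<Sum>k\<le>j. b k)"
      using J by (intro partial_sums_mono_from[OF b_pos]) auto
  qed (use estimates in simp_all)
qed

lemma exists_point_with_small_product:
  fixes b e :: "nat \<Rightarrow> real" and C \<epsilon> T :: real
  assumes b_pos: "\<And>n. n0 \<le> n \<Longrightarrow> 0 < b n"
    and radius: "1 \<le> fps_conv_radius (Abs_fps b)" "1 \<le> fps_conv_radius (Abs_fps e)"
    and unbounded: "filterlim (\<lambda>n. \<Sum>k\<le>n. b k) at_top sequentially"
    and doubling: "eventually (\<lambda>n. (\<Sum>k\<le>2 * n. b k) / (\<Sum>k\<le>n. b k) < C) sequentially"
    and ratio: "((\<lambda>n. (\<Sum>k\<le>n. (b k)\<^sup>2) * (\<Sum>k\<le>n. (e k)\<^sup>2) / (\<Sum>k\<le>n. b k) ^ 3) \<longlongrightarrow> 0) sequentially"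
    and \<epsilon>: "0 < \<epsilon>"
  shows "\<exists>x. 0 < x \<and> x < 1 \<and> T \<le> eval_fps (Abs_fps b) x \<and>
    eval_fps (fps_sq_coeffs (Abs_fps e)) x * eval_fps (fps_sq_coeffs (Abs_fps b)) x
      \<le> \<epsilon> * eval_fps (Abs_fps b) x ^ 3"
proof -
  define D where "D = max 2 (C ^ 3)"
  \<comment> \<open>at the point of scale \<open>N\<close>, \<open>B(x) \<ge> W\<close> and the product is at most \<open>K + \<epsilon> * W ^ 3 / 2\<close>,
    where \<open>W = (\<Sum>k\<le>N. b k) / (2 * D\<^sup>2)\<close>\<close>
  define \<eta> where "\<eta> = \<epsilon> / (64 * D ^ 7)"
  have D: "2 \<le> D" by (simp add: D_def)
  have \<eta>: "0 < \<eta>" using \<epsilon> D by (simp add: \<eta>_def)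
  obtain J where J: "\<And>m. J \<le> m \<Longrightarrow> (0 < (\<Sum>k\<le>m. b k) \<and>
      (\<Sum>k\<le>2 * m. b k) ^ 3 \<le> D * (\<Sum>k\<le>m. b k) ^ 3 \<and>
      (\<Sum>k\<le>m. (e k)\<^sup>2) * (\<Sum>k\<le>m. (b k)\<^sup>2) \<le> \<eta> * (\<Sum>k\<le>m. b k) ^ 3) \<and> n0 \<le> m"
    using eventually_conj[OF eventually_partial_sums_estimates[OF unbounded doubling ratio \<eta>]
        eventually_ge_at_top[of n0]]
    unfolding D_def eventually_sequentially by blast
  note estimates = J[THEN conjunct1]
  define K where "K = (\<Sum>m<J. (\<Sum>k\<le>m. (e k)\<^sup>2) * (\<Sum>k\<le>m. (b k)\<^sup>2))"
  define K1 where "K1 = (\<Sum>n<n0. \<bar>b n\<bar>)"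
  define W0 where "W0 = max (max 1 T) (max (2 * K1) (2 * K / \<epsilon>))"
  obtain N where N: "max J 1 \<le> N" "2 * D\<^sup>2 * W0 \<le> (\<Sum>k\<le>N. b k)"
    using eventually_ge_at_top[of "max J 1"] unbounded[unfolded filterlim_at_top, rule_format, of "2 * D\<^sup>2 * W0"]
    by (metis (mono_tags, lifting) eventually_conj eventually_happens' sequentially_bot)
  define W where "W = (\<Sum>k\<le>N. b k) / (2 * D\<^sup>2)"
  have "W0 \<le> W" using N(2) D by (simp add: W_def pos_le_divide_eq mult_ac)
  then have W: "1 \<le> W" "T \<le> W" "2 * K1 \<le> W" "2 * K / \<epsilon> \<le> W" by (auto simp: W0_def)
  have "n0 \<le> J" using J by blast
  then obtain x where x: "0 < x" "x < 1"
    and B: "(\<Sum>k\<le>N. b k) / D\<^sup>2 - 2 * K1 \<le> eval_fps (Abs_fps b) x"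
    and product: "eval_fps (fps_sq_coeffs (Abs_fps e)) x * eval_fps (fps_sq_coeffs (Abs_fps b)) x
      \<le> K + 4 * (\<eta> * D * (\<Sum>k\<le>N. b k) ^ 3)"
    using exists_point_at_scale[OF b_pos radius estimates, where N = N] N D \<eta>
    unfolding K_def K1_def by auto
  have "(\<Sum>k\<le>N. b k) / D\<^sup>2 = 2 * W" using D by (simp add: W_def)
  with B W have B: "W \<le> eval_fps (Abs_fps b) x" by linarith
  have "K \<le> \<epsilon> * W / 2" using W(4) \<epsilon> by (simp add: field_simps)
  also have "\<dots> \<le> \<epsilon> * W ^ 3 / 2"
    using W(1) \<epsilon> by (simp add: power3_eq_cube) (smt (verit) mult_le_cancel_left1 mult_nonneg_nonneg)
  finally have "K + 4 * (\<eta> * D * (\<Sum>k\<le>N. b k) ^ 3) \<le> \<epsilon> * W ^ 3"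
    using D by (simp add: \<eta>_def W_def power_divide power_mult_distrib field_simps eval_nat_numeral)
  also have "\<dots> \<le> \<epsilon> * eval_fps (Abs_fps b) x ^ 3"
    using B W \<epsilon> by (simp add: power_mono)
  finally show ?thesis using x B W product by (intro exI[of _ x]) auto
qed

section \<open>Sum sets\<close>

definition fps_indicator :: "nat set \<Rightarrow> real fps" where
  "fps_indicator A = Abs_fps (\<lambda>n. if n \<in> A then 1 else 0)"

lemma fps_nth_indicator_in_Nats: "fps_nth (fps_indicator A) n \<in> \<nat>"
  by (simp add: fps_indicator_def)

lemma fps_conv_radius_indicator: "1 \<le> fps_conv_radius (fps_indicator A)"
  by (rule fps_conv_radius_ge_1_if_bounded[of 0 _ 1]) (simp add: fps_indicator_def)

lemma fps_nth_indicator_square: "fps_nth (fps_indicator A * fps_indicator A) n = real (R A n)"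
proof -
  have "{(a, a'). a \<in> A \<and> a' \<in> A \<and> a + a' = n} = (\<lambda>k. (k, n - k)) ` {k \<in> {..n}. k \<in> A \<and> n - k \<in> A}"
    by (auto simp: image_def)
  then have "R A n = card {k \<in> {..n}. k \<in> A \<and> n - k \<in> A}"
    unfolding R_def by (simp add: card_image inj_on_def)
  also have "\<dots> = (\<Sum>k\<in>{k \<in> {..n}. k \<in> A \<and> n - k \<in> A}. 1)" by (rule card_eq_sum)
  also have "\<dots> = (\<Sum>k\<le>n. if k \<in> A \<and> n - k \<in> A then 1 else 0)" by (rule sum.inter_filter) simp
  finally show ?thesis
    by (auto simp: fps_indicator_def fps_mult_nth atLeast0AtMost of_nat_sum intro!: sum.cong)
qed

lemma fps_eq_if_partial_sums_eq:
  fixes f g :: "'a::comm_ring_1 fps"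
  assumes "\<And>N. (\<Sum>n\<le>N. fps_nth f n) = (\<Sum>n\<le>N. fps_nth g n) + e N"
  shows "f = g + (1 - fps_X) * Abs_fps e"
proof -
  have "f * Abs_fps (\<lambda>_. 1) = g * Abs_fps (\<lambda>_. 1) + Abs_fps e"
    by (rule fps_ext) (simp add: fps_mult_ones_eq_partial_sums assms)
  then have "(1 - fps_X) * (f * Abs_fps (\<lambda>_. 1)) = (1 - fps_X) * (g * Abs_fps (\<lambda>_. 1)) + (1 - fps_X) * Abs_fps e"
    by (simp add: distrib_left)
  moreover have "(1 - fps_X) * (h * Abs_fps (\<lambda>_. 1)) = h" for h :: "'a fps"
    by (simp only: mult.left_commute[of "1 - fps_X"] fps_one_minus_X_mult_ones mult_1_right)
  ultimately show ?thesis by simp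
qed

lemma fps_indicator_square_eq:
  assumes "\<And>N. (\<Sum>n\<le>N. real (R A n)) = (\<Sum>n\<le>N. \<Sum>k\<le>n. b k * b (n - k)) + e N"
  shows "fps_indicator A * fps_indicator A = Abs_fps b * Abs_fps b + (1 - fps_X) * Abs_fps e"
proof (rule fps_eq_if_partial_sums_eq)
  have "fps_nth (Abs_fps b * Abs_fps b) n = (\<Sum>k\<le>n. b k * b (n - k))" for n
    by (simp add: fps_mult_nth atLeast0AtMost)
  then show "(\<Sum>n\<le>N. fps_nth (fps_indicator A * fps_indicator A) n) =
      (\<Sum>n\<le>N. fps_nth (Abs_fps b * Abs_fps b) n) + e N" for N
    using assms by (simp add: fps_nth_indicator_square)
qed

lemma fps_conv_radius_ge_1_if_square_eq:
  fixes X B E :: "real fps"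
  assumes "1 \<le> fps_conv_radius X" "1 \<le> fps_conv_radius B" "X * X = B * B + (1 - fps_X) * E"
  shows "1 \<le> fps_conv_radius E"
proof -
  have "E = Abs_fps (\<lambda>_. 1) * (X * X - B * B)"
    using assms(3) fps_one_minus_X_mult_ones by (metis add_diff_cancel_left' mult.assoc mult.commute mult_1)
  then show ?thesis
    using assms(1,2) by (metis fps_conv_radius_mult_ge fps_conv_radius_diff_ge
        fps_conv_radius_ge_1_if_bounded[of 0 _ 1] fps_nth_Abs_fps abs_one order_refl)
qed

lemma eventually_bounds_if_limsup_less:
  fixes b :: "nat \<Rightarrow> real"
  assumes "eventually (\<lambda>n. 0 < b n) sequentially" "limsup (\<lambda>n. ereal (b n)) < 1"
  obtains \<beta> n0 where "\<beta> < 1" "\<And>n. n0 \<le> n \<Longrightarrow> 0 < b n \<and> b n < \<beta>"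
proof -
  obtain z where z: "limsup (\<lambda>n. ereal (b n)) < z" "z < 1" using assms(2) dense by blast
  then obtain \<beta> where \<beta>: "z = ereal \<beta>" by (cases z) auto
  have "eventually (\<lambda>n. ereal (b n) < z) sequentially" using z(1) by (rule Limsup_lessD)
  with assms(1) have "eventually (\<lambda>n. 0 < b n \<and> b n < \<beta>) sequentially"
    by eventually_elim (simp add: \<beta>)
  then show ?thesis using that z \<beta> by (auto simp: eventually_sequentially)
qed

lemma filterlim_partial_sums_at_top:
  fixes b :: "nat \<Rightarrow> real"
  assumes b_pos: "\<And>n. n0 \<le> n \<Longrightarrow> 0 < b n" and unbounded: "\<not> bdd_above (range (\<lambda>n. \<Sum>k\<le>n. b k))"
  shows "filterlim (\<lambda>n. \<Sum>k\<le>n. b k) at_top sequentially"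
  unfolding filterlim_at_top eventually_sequentially
proof
  fix Z
  define M where "M = max Z (Max ((\<lambda>n. \<Sum>k\<le>n. b k) ` {..n0}))"
  obtain m where m: "M < (\<Sum>k\<le>m. b k)"
    using unbounded by (auto simp: bdd_above_def not_le)
  have "n0 \<le> m"
  proof (rule ccontr)
    assume "\<not> n0 \<le> m"
    then have "(\<Sum>k\<le>m. b k) \<le> Max ((\<lambda>n. \<Sum>k\<le>n. b k) ` {..n0})" by (intro Max_ge) auto
    moreover have "Max ((\<lambda>n. \<Sum>k\<le>n. b k) ` {..n0}) \<le> M" by (simp add: M_def)
    ultimately show False using m by linarith
  qed
  have "Z \<le> (\<Sum>k\<le>n. b k)" if "m \<le> n" for n
  proof -
    have "Z \<le> M" by (simp add: M_def)
    also have "\<dots> < (\<Sum>k\<le>m. b k)" by (rule m)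
    also have "\<dots> \<le> (\<Sum>k\<le>n. b k)" by (rule partial_sums_mono_from[OF b_pos \<open>n0 \<le> m\<close> that])
    finally show ?thesis by simp
  qed
  then show "\<exists>N. \<forall>n\<ge>N. Z \<le> (\<Sum>k\<le>n. b k)" by blast
qed

lemma eq_0_if_partial_sums_bounded:
  fixes b e :: "nat \<Rightarrow> real"
  assumes b_pos: "\<And>n. n0 \<le> n \<Longrightarrow> 0 < b n"
    and bounded: "bdd_above (range (\<lambda>n. \<Sum>k\<le>n. b k))"
    and ratio: "((\<lambda>n. (\<Sum>k\<le>n. (b k)\<^sup>2) * (\<Sum>k\<le>n. (e k)\<^sup>2) / (\<Sum>k\<le>n. b k) ^ 3) \<longlongrightarrow> 0) sequentially"
  shows "e k = 0"
proof (rule ccontr)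
  assume ek: "e k \<noteq> 0"
  define Bs where "Bs n = (\<Sum>k\<le>n. b k)" for n
  obtain K where K: "\<And>n. Bs n \<le> K" using bounded by (auto simp: bdd_above_def Bs_def)
  define K' where "K' = 1 + \<bar>K\<bar> + \<bar>Bs n0\<bar>"
  have K': "\<bar>Bs n\<bar> \<le> K'" if "n0 \<le> n" for n
    using K[of n] partial_sums_mono_from[where b = b, OF b_pos order_refl that] unfolding K'_def Bs_def by linarith
  define \<eta> where "\<eta> = (b n0)\<^sup>2 * (e k)\<^sup>2 / K' ^ 3"
  have "0 < \<eta>" using b_pos[of n0] ek by (simp add: \<eta>_def K'_def add_pos_nonneg)
  from order_tendstoD(2)[OF tendsto_rabs_zero[OF ratio] this]
  obtain N where N: "\<And>n. N \<le> n \<Longrightarrow> \<bar>(\<Sum>k\<le>n. (b k)\<^sup>2) * (\<Sum>k\<le>n. (e k)\<^sup>2) / Bs n ^ 3\<bar> < \<eta>"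
    by (auto simp: eventually_sequentially Bs_def)
  define M where "M = max N (max n0 k)"
  \<comment> \<open>the partial sums increase strictly from \<open>n0\<close> on, so they vanish at most once\<close>
  define L where "L = (if Bs M = 0 then Suc M else M)"
  have L: "N \<le> L" "n0 \<le> L" "k \<le> L" by (auto simp: L_def M_def)
  have "0 < b (Suc M)" by (intro b_pos) (simp add: M_def)
  then have "Bs L \<noteq> 0" by (auto simp: L_def Bs_def)
  have "\<eta> \<le> (\<Sum>k\<le>L. (b k)\<^sup>2) * (\<Sum>k\<le>L. (e k)\<^sup>2) / \<bar>Bs L\<bar> ^ 3"
    unfolding \<eta>_def
  proof (rule frac_le)
    show "(b n0)\<^sup>2 * (e k)\<^sup>2 \<le> (\<Sum>k\<le>L. (b k)\<^sup>2) * (\<Sum>k\<le>L. (e k)\<^sup>2)"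
      using L by (intro mult_mono member_le_sum sum_nonneg) auto
    show "\<bar>Bs L\<bar> ^ 3 \<le> K' ^ 3" using K'[OF L(2)] by (intro power_mono) auto
  qed (use \<open>Bs L \<noteq> 0\<close> in \<open>auto intro!: sum_nonneg mult_nonneg_nonneg\<close>)
  also have "\<dots> = \<bar>(\<Sum>k\<le>L. (b k)\<^sup>2) * (\<Sum>k\<le>L. (e k)\<^sup>2) / Bs L ^ 3\<bar>"
    by (simp add: abs_mult sum_nonneg power_abs)
  finally show False using N[OF L(1)] by simp
qed

lemma no_natural_square_root:
  fixes X B :: "real fps"
  assumes X: "\<And>n. fps_nth X n \<in> \<nat>" and eq: "X * X = B * B"
    and B: "0 < fps_nth B n0" "fps_nth B n0 < 1"
  shows False
proof -
  have "X = B \<or> X = - B" using eq by (simp add: square_eq_iff)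
  then have "fps_nth X n0 = fps_nth B n0 \<or> fps_nth X n0 = - fps_nth B n0" by auto
  moreover obtain m :: nat where "fps_nth X n0 = m" using X[of n0] by (auto elim: Nats_cases)
  ultimately show False using B by (cases m) auto
qed

lemma no_indicator_if_partial_sums_bounded:
  fixes X :: "real fps" and b e :: "nat \<Rightarrow> real"
  assumes X_Nats: "\<And>n. fps_nth X n \<in> \<nat>"
    and eq: "X * X = Abs_fps b * Abs_fps b + (1 - fps_X) * Abs_fps e"
    and b: "\<And>n. n0 \<le> n \<Longrightarrow> 0 < b n \<and> b n < \<beta>" and \<beta>: "\<beta> < 1"
    and bounded: "bdd_above (range (\<lambda>n. \<Sum>k\<le>n. b k))"
    and ratio: "((\<lambda>n. (\<Sum>k\<le>n. (b k)\<^sup>2) * (\<Sum>k\<le>n. (e k)\<^sup>2) / (\<Sum>k\<le>n. b k) ^ 3) \<longlongrightarrow> 0) sequentially"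
  shows False
proof -
  have "Abs_fps e = 0" using eq_0_if_partial_sums_bounded[OF _ bounded ratio] b by (auto simp: fps_eq_iff)
  then show False using no_natural_square_root[OF X_Nats, of "Abs_fps b" n0] eq b[of n0] \<beta> by simp
qed

lemma no_indicator_if_partial_sums_unbounded:
  fixes X :: "real fps" and b e :: "nat \<Rightarrow> real"
  assumes X_Nats: "\<And>n. fps_nth X n \<in> \<nat>" and rX: "1 \<le> fps_conv_radius X"
    and radius: "1 \<le> fps_conv_radius (Abs_fps b)" "1 \<le> fps_conv_radius (Abs_fps e)"
    and eq: "X * X = Abs_fps b * Abs_fps b + (1 - fps_X) * Abs_fps e"
    and b: "\<And>n. n0 \<le> n \<Longrightarrow> 0 < b n \<and> b n < \<beta>" and \<beta>: "\<beta> < 1"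
    and unbounded: "filterlim (\<lambda>n. \<Sum>k\<le>n. b k) at_top sequentially"
    and doubling: "eventually (\<lambda>n. (\<Sum>k\<le>2 * n. b k) / (\<Sum>k\<le>n. b k) < C) sequentially"
    and ratio: "((\<lambda>n. (\<Sum>k\<le>n. (b k)\<^sup>2) * (\<Sum>k\<le>n. (e k)\<^sup>2) / (\<Sum>k\<le>n. b k) ^ 3) \<longlongrightarrow> 0) sequentially"
  shows False
proof -
  define \<delta> where "\<delta> = (1 + \<beta>) / 2"
  have \<delta>: "0 < \<delta>" "\<delta> < 1" "\<beta> < \<delta>" using \<beta> b[of n0] by (auto simp: \<delta>_def)
  define K0 where "K0 = (\<Sum>n<n0. \<bar>(b n)\<^sup>2 - \<beta> * b n\<bar>)"
  obtain x where x: "0 < x" "x < 1"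
    and large: "K0 / (\<delta> - \<beta>) + 4 / (1 - \<delta>) + 1 \<le> eval_fps (Abs_fps b) x"
    and product: "eval_fps (fps_sq_coeffs (Abs_fps e)) x * eval_fps (fps_sq_coeffs (Abs_fps b)) x
      \<le> \<delta> * (1 - \<delta>)\<^sup>2 / 16 * eval_fps (Abs_fps b) x ^ 3"
    using exists_point_with_small_product[OF _ radius unbounded doubling ratio,
        of n0 "\<delta> * (1 - \<delta>)\<^sup>2 / 16" "K0 / (\<delta> - \<beta>) + 4 / (1 - \<delta>) + 1"] b \<delta> by auto
  have pos: "0 \<le> K0 / (\<delta> - \<beta>)" "0 < 4 / (1 - \<delta>)" using \<delta> by (simp_all add: K0_def sum_nonneg)
  then have "K0 / (\<delta> - \<beta>) \<le> eval_fps (Abs_fps b) x" using large by linarith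
  then have K0: "K0 \<le> (\<delta> - \<beta>) * eval_fps (Abs_fps b) x"
    using \<delta> by (simp add: pos_divide_le_eq mult.commute)
  have "summable (\<lambda>n. b n * x ^ n)" "summable (\<lambda>n. (b n)\<^sup>2 * x ^ n)"
    using summable_fps[OF norm_less_fps_conv_radius[OF radius(1)], of x]
      summable_fps[OF norm_less_fps_conv_radius[OF fps_conv_radius_sq_coeffs[OF radius(1)]], of x] x
    by simp_all
  then have "eval_fps (fps_sq_coeffs (Abs_fps b)) x \<le> \<beta> * eval_fps (Abs_fps b) x + K0"
    unfolding eval_fps_def fps_sq_coeffs_nth fps_nth_Abs_fps K0_def using x b
    by (intro suminf_power2_le_if_eventually_less) auto
  also have "\<dots> \<le> \<delta> * eval_fps (Abs_fps b) x" using K0 by (simp add: algebra_simps)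
  finally show False
    using square_eq_contradiction_at_point[OF X_Nats rX radius eq x \<delta>(1,2) _ product] large pos
    by linarith
qed

theorem theorem3:
  fixes b e :: "nat \<Rightarrow> real"
  assumes h1: "eventually (\<lambda>n. b n > 0) sequentially"
    and h2: "\<exists>C. eventually (\<lambda>n. (\<Sum>k\<le>2*n. b k) / (\<Sum>k\<le>n. b k) < C) sequentially"
    and h3: "limsup (\<lambda>n. ereal (b n)) < 1"
    and h4: "((\<lambda>n. (\<Sum>k\<le>n. (b k)\<^sup>2) * (\<Sum>k\<le>n. (e k)\<^sup>2) / (\<Sum>k\<le>n. b k) ^ 3)
               \<longlongrightarrow> 0) sequentially"
  shows "\<not> (\<exists>A :: nat set. \<forall>N. (\<Sum>n\<le>N. real (R A n))
            = (\<Sum>n\<le>N. \<Sum>k\<le>n. b k * b (n - k)) + e N)"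
proof
  assume "\<exists>A :: nat set. \<forall>N. (\<Sum>n\<le>N. real (R A n)) = (\<Sum>n\<le>N. \<Sum>k\<le>n. b k * b (n - k)) + e N"
  then obtain A :: "nat set" where
    "\<And>N. (\<Sum>n\<le>N. real (R A n)) = (\<Sum>n\<le>N. \<Sum>k\<le>n. b k * b (n - k)) + e N"
    by blast
  then have eq: "fps_indicator A * fps_indicator A = Abs_fps b * Abs_fps b + (1 - fps_X) * Abs_fps e"
    by (rule fps_indicator_square_eq)
  note X = fps_nth_indicator_in_Nats[of A] fps_conv_radius_indicator[of A]
  obtain \<beta> n0 where \<beta>: "\<beta> < 1" and b: "\<And>n. n0 \<le> n \<Longrightarrow> 0 < b n \<and> b n < \<beta>"
    using eventually_bounds_if_limsup_less[OF h1 h3] by blast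
  have rB: "1 \<le> fps_conv_radius (Abs_fps b)"
    using b \<beta> by (intro fps_conv_radius_ge_1_if_bounded[of n0 _ 1]) (fastforce simp: abs_if)
  have rE: "1 \<le> fps_conv_radius (Abs_fps e)" by (rule fps_conv_radius_ge_1_if_square_eq[OF X(2) rB eq])
  show False
  proof (cases "bdd_above (range (\<lambda>n. \<Sum>k\<le>n. b k))")
    case True
    show False by (rule no_indicator_if_partial_sums_bounded[OF X(1) eq b \<beta> True h4])
  next
    case False
    then have unbounded: "filterlim (\<lambda>n. \<Sum>k\<le>n. b k) at_top sequentially"
      using b by (intro filterlim_partial_sums_at_top[of n0]) auto
    obtain C where doubling: "eventually (\<lambda>n. (\<Sum>k\<le>2 * n. b k) / (\<Sum>k\<le>n. b k) < C) sequentially"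
      using h2 by blast
    show False by (rule no_indicator_if_partial_sums_unbounded[OF X rB rE eq b \<beta> unbounded doubling h4])
  qed
qed

end
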